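(* Let $J,K,L\ge 1$ be integers (with $K=0$ or $L=0$ also allowed, in which case the corresponding sums are absent), let $p,q,n_1,\dots,n_J$ be positive integers, $n=\sum_{j=1}^J n_j$, and let $\mathbf X_\cdot=[\mathbf X_1,\dots,\mathbf X_J]\in\mathbb R^{p\times n}$ and $\mathbf Y_\cdot=[\mathbf Y_1,\dots,\mathbf Y_J]\in\mathbb R^{q\times n}$ with $\mathbf X_j\in\mathbb R^{p\times n_j}$, $\mathbf Y_j\in\mathbb R^{q\times n_j}$. Let $\mathbf C_Y\in\{0,1\}^{J\times K}$ and $\mathbf C_S\in\{0,1\}^{J\times L}$, and for $k=1,\dots,K$ let $\mathbf Y_\cdot^{(k)}=[\mathbf Y_1^{(k)},\dots,\mathbf Y_J^{(k)}]$ where $\mathbf Y_j^{(k)}=\mathbf Y_j$ if $\mathbf C_Y[j,k]=1$ and $\mathbf Y_j^{(k)}=\mathbf 0_{q\times n_j}$ otherwise. For $l=1,\dots,L$ let $\mathcal S_l$ be the set of matrices $\mathbf S=[\mathbf S_1,\dots,\mathbf S_J]\in\mathbb R^{p\times n}$ (blocks $\mathbf S_j\in\mathbb R^{p\times n_j}$) with $\mathbf S_j=\mathbf 0$ whenever $\mathbf C_S[j,l]=0$. Let $\lambda_B^{(k)}>0$ and $\lambda_S^{(l)}>0$. Consider $$F(\{\mathbf B_k\},\{\mathbf S^{(l)}\})=\tfrac12\Big\|\mathbf X_\cdot-\sum_{k=1}^K\mathbf B_k\mathbf Y_\cdot^{(k)}-\sum_{l=1}^L\mathbf S^{(l)}\Big\|_F^2+\sum_{k=1}^K\lambda_B^{(k)}\|\mathbf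 B_k\|_*+\sum_{l=1}^L\lambda_S^{(l)}\|\mathbf S^{(l)}\|_*,$$ minimized over $\mathbf B_k\in\mathbb R^{p\times q}$ and $\mathbf S^{(l)}\in\mathcal S_l$, and, for integers $r_B\ge\min(p,q)$ and $r_S\ge\min(p,n)$, $$G=\tfrac12\Big\{\Big\|\mathbf X_\cdot-\sum_{k=1}^K\mathbf U_B^{(k)}\mathbf V_B^{(k)T}\mathbf Y_\cdot^{(k)}-\sum_{l=1}^L\mathbf U_S^{(l)}\mathbf V_S^{(l)T}\Big\|_F^2+\sum_{k=1}^K\lambda_B^{(k)}\big(\|\mathbf U_B^{(k)}\|_F^2+\|\mathbf V_B^{(k)}\|_F^2\big)+\sum_{l=1}^L\lambda_S^{(l)}\big(\|\mathbf U_S^{(l)}\|_F^2+\|\mathbf V_S^{(l)}\|_F^2\big)\Big\},$$ minimized over $\mathbf U_B^{(k)}\in\mathbb R^{p\times r_B}$, $\mathbf V_B^{(k)}\in\mathbb R^{q\times r_B}$, $\mathbf U_S^{(l)}\in\mathbb R^{p\times r_S}$, $\mathbf V_S^{(l)}\in\mathbb R^{n\times r_S}$ such that $\mathbf U_S^{(l)}\mathbf V_S^{(l)T}\in\mathcal S_l$. Then the two problems have the same minimal value, and the solutions coincide: $(\{\mathbf B_k\},\{\mathbf S^{(l)}\})$ minimizes $F$ if and only if there is a minimizer of $G$ with $\mathbf B_k=\mathbf U_B^{(k)}\mathbf V_B^{(k)T}$ for all $k$ and $\mathbf S^{(l)}=\mathbf U_S^{(l)}\mathbf V_S^{(l)T}$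 for all $l$.
   Context: $\|\cdot\|_*$ denotes the nuclear norm (sum of singular values) and $\|\cdot\|_F$ the Frobenius norm. The matrices $\mathbf C_Y,\mathbf C_S$ are fixed binary indicator matrices specifying on which cohorts each covariate-driven module $\mathbf B_k\mathbf Y_\cdot^{(k)}$ and each auxiliary module $\mathbf S^{(l)}$ is present. *)

theory Defs
  imports Complex_Main "Jordan_Normal_Form.Matrix"
begin

definition frob_norm :: "real mat \<Rightarrow> real" where
  "frob_norm A = sqrt (\<Sum>i<dim_row A. \<Sum>j<dim_col A. (A $$ (i,j))^2)"

definition nuclear_norm :: "real mat \<Rightarrow> real" where
  "nuclear_norm A = (THE s. \<exists>r U V (\<sigma>::nat \<Rightarrow> real).
      U \<in> carrier_mat (dim_row A) r \<and> V \<in> carrier_mat (dim_col A) r \<and>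
      transpose_mat U * U = 1\<^sub>m r \<and> transpose_mat V * V = 1\<^sub>m r \<and>
      (\<forall>i<r. \<sigma> i > 0) \<and>
      A = U * mat r r (\<lambda>(i,j). if i = j then \<sigma> i else 0) * transpose_mat V \<and>
      s = (\<Sum>i<r. \<sigma> i))"

text \<open>Cohort (block index j) of column c, for contiguous blocks of sizes nj 0, nj 1, ...\<close>
definition cohort :: "(nat \<Rightarrow> nat) \<Rightarrow> nat \<Rightarrow> nat" where
  "cohort nj c = (LEAST j. c < (\<Sum>i<Suc j. nj i))"

definition masked_Y :: "(nat \<Rightarrow> nat) \<Rightarrow> (nat \<Rightarrow> nat \<Rightarrow> bool) \<Rightarrow> real mat \<Rightarrow> nat \<Rightarrow> real mat" where
  "masked_Y nj CY Y k = mat (dim_row Y) (dim_col Y)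
     (\<lambda>(i,c). if CY (cohort nj c) k then Y $$ (i,c) else 0)"

definition Sset :: "(nat \<Rightarrow> nat) \<Rightarrow> (nat \<Rightarrow> nat \<Rightarrow> bool) \<Rightarrow> nat \<Rightarrow> nat \<Rightarrow> nat \<Rightarrow> real mat set" where
  "Sset nj CS p n l = {S \<in> carrier_mat p n.
     \<forall>i<p. \<forall>c<n. \<not> CS (cohort nj c) l \<longrightarrow> S $$ (i,c) = 0}"

definition residual :: "real mat \<Rightarrow> nat \<Rightarrow> (nat \<Rightarrow> real mat) \<Rightarrow> (nat \<Rightarrow> real mat)
    \<Rightarrow> nat \<Rightarrow> (nat \<Rightarrow> real mat) \<Rightarrow> real mat" where
  "residual X K Yk B L S = mat (dim_row X) (dim_col X)
     (\<lambda>(i,c). X $$ (i,c) - (\<Sum>k<K. (B k * Yk k) $$ (i,c)) - (\<Sum>l<L. S l $$ (i,c)))"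

definition F_obj :: "(nat \<Rightarrow> nat) \<Rightarrow> (nat \<Rightarrow> nat \<Rightarrow> bool) \<Rightarrow> real mat \<Rightarrow> real mat
    \<Rightarrow> nat \<Rightarrow> nat \<Rightarrow> (nat \<Rightarrow> real) \<Rightarrow> (nat \<Rightarrow> real)
    \<Rightarrow> (nat \<Rightarrow> real mat) \<times> (nat \<Rightarrow> real mat) \<Rightarrow> real" where
  "F_obj nj CY X Y K L lamB lamS BS =
     (case BS of (B, S) \<Rightarrow>
       1/2 * (frob_norm (residual X K (masked_Y nj CY Y) B L S))^2
       + (\<Sum>k<K. lamB k * nuclear_norm (B k))
       + (\<Sum>l<L. lamS l * nuclear_norm (S l)))"

definition F_feas :: "(nat \<Rightarrow> nat) \<Rightarrow> (nat \<Rightarrow> nat \<Rightarrow> bool) \<Rightarrow> nat \<Rightarrow> nat \<Rightarrow> nat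
    \<Rightarrow> nat \<Rightarrow> nat \<Rightarrow> ((nat \<Rightarrow> real mat) \<times> (nat \<Rightarrow> real mat)) set" where
  "F_feas nj CS p q n K L = {(B, S).
     (\<forall>k<K. B k \<in> carrier_mat p q) \<and> (\<forall>l<L. S l \<in> Sset nj CS p n l)}"

definition G_obj :: "(nat \<Rightarrow> nat) \<Rightarrow> (nat \<Rightarrow> nat \<Rightarrow> bool) \<Rightarrow> real mat \<Rightarrow> real mat
    \<Rightarrow> nat \<Rightarrow> nat \<Rightarrow> (nat \<Rightarrow> real) \<Rightarrow> (nat \<Rightarrow> real)
    \<Rightarrow> (nat \<Rightarrow> real mat) \<times> (nat \<Rightarrow> real mat) \<times> (nat \<Rightarrow> real mat) \<times> (nat \<Rightarrow> real mat)
    \<Rightarrow> real" where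
  "G_obj nj CY X Y K L lamB lamS UV =
     (case UV of (UB, VB, US, VS) \<Rightarrow>
       1/2 * ((frob_norm (residual X K (masked_Y nj CY Y) (\<lambda>k. UB k * transpose_mat (VB k))
                    L (\<lambda>l. US l * transpose_mat (VS l))))^2
         + (\<Sum>k<K. lamB k * ((frob_norm (UB k))^2 + (frob_norm (VB k))^2))
         + (\<Sum>l<L. lamS l * ((frob_norm (US l))^2 + (frob_norm (VS l))^2))))"

definition G_feas :: "(nat \<Rightarrow> nat) \<Rightarrow> (nat \<Rightarrow> nat \<Rightarrow> bool) \<Rightarrow> nat \<Rightarrow> nat \<Rightarrow> nat
    \<Rightarrow> nat \<Rightarrow> nat \<Rightarrow> nat \<Rightarrow> nat
    \<Rightarrow> ((nat \<Rightarrow> real mat) \<times> (nat \<Rightarrow> real mat) \<times> (nat \<Rightarrow> real mat) \<times> (nat \<Rightarrow> real mat)) set" where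
  "G_feas nj CS p q n rB rS K L = {(UB, VB, US, VS).
     (\<forall>k<K. UB k \<in> carrier_mat p rB \<and> VB k \<in> carrier_mat q rB) \<and>
     (\<forall>l<L. US l \<in> carrier_mat p rS \<and> VS l \<in> carrier_mat n rS \<and>
            US l * transpose_mat (VS l) \<in> Sset nj CS p n l)}"

end

(*
  Everything rests on the variational characterisation of the nuclear norm: for a p x n
  matrix A and any m >= min p n,
    ||A||_* = min { (||W||_F^2 + ||Z||_F^2) / 2 | W in R^(p x m), Z in R^(n x m), A = W Z^T }.
  The lower bound holds because s_i = u_i^T W Z^T v_i for a compact SVD A = U diag(s) V^T,
  so AM-GM and Bessel's inequality bound sum_i s_i by the Frobenius norms; the minimum is
  attained by W = U diag(sqrt s), Z = V diag(sqrt s). Hence every feasible point of G yields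
  a feasible point of F with no larger value, and every feasible point of F arises in this
  way from one of G with the same value. The two problems therefore share their infimum and
  their minimisers as soon as G attains its minimum, which follows by compactness: on a
  sublevel set the ridge penalties bound all factors, and G is continuous.
  The compact SVD itself is built by deflation, each step taking a maximiser of x^T M y
  over the product of the unit balls.
*)
theory Submission
  imports Defs
begin

section \<open>Minimisers from bounded coordinates\<close>

lemma convergent_subseq_finite_family:
  fixes c :: "nat \<Rightarrow> 'i \<Rightarrow> real"
  assumes "finite I" and "\<And>k i. i \<in> I \<Longrightarrow> \<bar>c k i\<bar> \<le> M"
  shows "\<exists>r. strict_mono r \<and> (\<forall>i\<in>I. convergent (\<lambda>k. c (r k) i))"
  using assms
proof (induction I arbitrary: c rule: finite_induct)
  case empty
  show ?case using strict_mono_id by (auto simp: id_def)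
next
  case (insert i I)
  obtain r where r: "strict_mono r" "\<forall>j\<in>I. convergent (\<lambda>k. c (r k) j)"
    using insert.IH[of c] insert.prems by blast
  obtain s where s: "strict_mono s" "monoseq (\<lambda>k. c (r (s k)) i)"
    using seq_monosub[of "\<lambda>k. c (r k) i"] by (auto simp: o_def)
  have "Bseq (\<lambda>k. c (r (s k)) i)"
    using insert.prems by (intro BseqI'[of _ M]) auto
  then have "convergent (\<lambda>k. c (r (s k)) i)"
    using s(2) Bseq_monoseq_convergent by blast
  moreover have "convergent (\<lambda>k. c (r (s k)) j)" if "j \<in> I" for j
    using convergent_subseq_convergent[OF r(2)[rule_format, OF that] s(1)] by (simp add: o_def)
  ultimately show ?case
    using strict_mono_o[OF r(1) s(1)] by (intro exI[of _ "r \<circ> s"]) (auto simp: o_def)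
qed

lemma bdd_below_if_subseq_tendsto:
  fixes f :: "'a \<Rightarrow> real"
  assumes subseq: "\<And>xs :: nat \<Rightarrow> 'a. (\<And>k. xs k \<in> S) \<Longrightarrow>
                   \<exists>y\<in>S. \<exists>r. strict_mono r \<and> (\<lambda>k. f (xs (r k))) \<longlonglongrightarrow> f y"
  shows "bdd_below (f ` S)"
proof (rule ccontr)
  assume "\<not> bdd_below (f ` S)"
  then have "\<exists>x\<in>S. f x < - real k" for k
    using bdd_below.I2[of S "- real k" f] by (meson not_le)
  then obtain xs where xs: "\<And>k. xs k \<in> S" "\<And>k. f (xs k) < - real k" by metis
  obtain y r where r: "strict_mono r" "(\<lambda>k. f (xs (r k))) \<longlonglongrightarrow> f y"
    using subseq[of xs, OF xs(1)] by blast
  have lt: "f (xs (r k)) < - real k" for k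
    using xs(2)[of "r k"] seq_suble[OF r(1), of k] by simp
  have "\<forall>\<^sub>F k in sequentially. f y - 1 < f (xs (r k))"
    using order_tendstoD(1)[OF r(2), of "f y - 1"] by simp
  moreover have "\<forall>\<^sub>F k in sequentially. - real k \<le> f y - 1"
    by (rule eventually_sequentiallyI[of "nat \<lceil>1 - f y\<rceil>"]) linarith
  ultimately have "\<forall>\<^sub>F k in sequentially. False"
    by eventually_elim (use lt in \<open>fastforce dest: less_le_trans\<close>)
  then show False by simp
qed

lemma attains_inf_subseq:
  fixes f :: "'a \<Rightarrow> real"
  assumes "S \<noteq> {}"
    and subseq: "\<And>xs :: nat \<Rightarrow> 'a. (\<And>k. xs k \<in> S) \<Longrightarrow>
                   \<exists>y\<in>S. \<exists>r. strict_mono r \<and> (\<lambda>k. f (xs (r k))) \<longlonglongrightarrow> f y"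
  shows "\<exists>y\<in>S. \<forall>x\<in>S. f y \<le> f x"
proof -
  have bdd: "bdd_below (f ` S)"
    using subseq by (rule bdd_below_if_subseq_tendsto)
  define c where "c = Inf (f ` S)"
  have c_le: "c \<le> f x" if "x \<in> S" for x
    unfolding c_def using bdd that by (simp add: cInf_lower)
  have "\<exists>x\<in>S. f x < c + inverse (real (Suc k))" for k
    using cInf_lessD[of "f ` S" "c + inverse (real (Suc k))"] \<open>S \<noteq> {}\<close> unfolding c_def by force
  then obtain xs where xs: "\<And>k. xs k \<in> S" "\<And>k. f (xs k) < c + inverse (real (Suc k))" by metis
  obtain y r where y: "y \<in> S" and r: "strict_mono r" "(\<lambda>k. f (xs (r k))) \<longlonglongrightarrow> f y"
    using subseq[of xs, OF xs(1)] by blast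
  have le: "f (xs (r k)) \<le> c + inverse (real (Suc k))" for k
  proof -
    have "inverse (real (Suc (r k))) \<le> inverse (real (Suc k))"
      using seq_suble[OF r(1), of k] by (simp add: le_imp_inverse_le)
    then show ?thesis using xs(2)[of "r k"] by linarith
  qed
  have "(\<lambda>k. c + inverse (real (Suc k))) \<longlonglongrightarrow> c + 0"
    by (intro tendsto_add tendsto_const LIMSEQ_inverse_real_of_nat)
  then have "f y \<le> c + 0"
    using LIMSEQ_le[OF r(2)] le by blast
  then show ?thesis using y c_le by force
qed

lemma attains_inf_bounded_coords:
  fixes f :: "'a \<Rightarrow> real" and coord :: "'a \<Rightarrow> 'i \<Rightarrow> real"
  assumes "finite I" and "S \<noteq> {}"
    and bounded: "\<And>x i. x \<in> S \<Longrightarrow> i \<in> I \<Longrightarrow> \<bar>coord x i\<bar> \<le> M"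
    and closed: "\<And>xs. (\<And>k. xs k \<in> S) \<Longrightarrow> (\<And>i. i \<in> I \<Longrightarrow> convergent (\<lambda>k. coord (xs k) i)) \<Longrightarrow>
                   \<exists>y\<in>S. (\<lambda>k. f (xs k)) \<longlonglongrightarrow> f y"
  shows "\<exists>y\<in>S. \<forall>x\<in>S. f y \<le> f x"
proof (rule attains_inf_subseq[OF \<open>S \<noteq> {}\<close>])
  fix xs :: "nat \<Rightarrow> 'a" assume xs: "\<And>k. xs k \<in> S"
  obtain r where r: "strict_mono r" "\<forall>i\<in>I. convergent (\<lambda>k. coord (xs (r k)) i)"
    using convergent_subseq_finite_family[OF \<open>finite I\<close>, of "\<lambda>k. coord (xs k)" M] bounded xs
    by blast
  then show "\<exists>y\<in>S. \<exists>r. strict_mono r \<and> (\<lambda>k. f (xs (r k))) \<longlonglongrightarrow> f y"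
    using closed[of "\<lambda>k. xs (r k)"] xs by blast
qed

section \<open>Orthonormal families\<close>

text \<open>A vector of \<open>\<real>\<^sup>n\<close> is a function on \<open>\<nat>\<close> of which only the coordinates below \<open>n\<close> matter.\<close>

definition dot :: "nat \<Rightarrow> (nat \<Rightarrow> real) \<Rightarrow> (nat \<Rightarrow> real) \<Rightarrow> real" where
  "dot n x y = (\<Sum>a<n. x a * y a)"

definition orthonormal :: "nat \<Rightarrow> nat \<Rightarrow> (nat \<Rightarrow> nat \<Rightarrow> real) \<Rightarrow> bool" where
  "orthonormal n r u \<longleftrightarrow> (\<forall>i<r. \<forall>j<r. dot n (u i) (u j) = (if i = j then 1 else 0))"

lemma dot_commute: "dot n x y = dot n y x"
  unfolding dot_def by (simp add: mult.commute)

lemma dot_self_nonneg: "dot n x x \<ge> 0"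
  unfolding dot_def by (intro sum_nonneg) auto

lemma dot_cong: "(\<And>a. a < n \<Longrightarrow> y a = y' a) \<Longrightarrow> dot n x y = dot n x y'"
  unfolding dot_def by (intro sum.cong) auto

lemma dot_sum_right: "dot n x (\<lambda>a. \<Sum>i\<in>I. f i a) = (\<Sum>i\<in>I. dot n x (f i))"
  unfolding dot_def by (simp add: sum_distrib_left sum.swap[of _ I])

lemma dot_scale_right: "dot n x (\<lambda>a. c * y a) = c * dot n x y"
  unfolding dot_def by (simp add: sum_distrib_left mult_ac)

lemma dot_mult_const_right: "dot n x (\<lambda>a. y a * c) = dot n x y * c"
  using dot_scale_right[of n x c y] by (simp add: mult.commute)

lemma dot_scale_left: "dot n (\<lambda>a. c * x a) y = c * dot n x y"
  unfolding dot_def by (simp add: sum_distrib_left mult_ac)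

lemma dot_diff_self:
  "dot n (\<lambda>a. x a - y a) (\<lambda>a. x a - y a) = dot n x x - 2 * dot n x y + dot n y y"
  unfolding dot_def
  by (simp add: algebra_simps sum.distrib sum_subtractf sum_distrib_left dot_def)

lemma sq_le_dot_self: "a < n \<Longrightarrow> (x a)\<^sup>2 \<le> dot n x x"
  unfolding dot_def power2_eq_square by (intro member_le_sum) auto

lemma tendsto_dot:
  assumes "\<And>a. a < n \<Longrightarrow> (\<lambda>k. x k a) \<longlonglongrightarrow> x0 a" and "\<And>a. a < n \<Longrightarrow> (\<lambda>k. y k a) \<longlonglongrightarrow> y0 a"
  shows "(\<lambda>k. dot n (x k) (y k)) \<longlonglongrightarrow> dot n x0 y0"
  unfolding dot_def using assms by (intro tendsto_sum tendsto_mult) auto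

lemma orthonormal_expansion_coeff:
  assumes "orthonormal n r u" and "i < r"
  shows "(\<Sum>j<r. t j * dot n (u i) (u j)) = t i"
proof -
  have "(\<Sum>j<r. t j * dot n (u i) (u j)) = (\<Sum>j<r. if j = i then t i else 0)"
    using assms unfolding orthonormal_def by (intro sum.cong) auto
  then show ?thesis using assms(2) by simp
qed

lemma bessel_inequality:
  assumes "orthonormal n r u"
  shows "(\<Sum>i<r. (dot n (u i) x)\<^sup>2) \<le> dot n x x"
proof -
  define t where "t i = dot n (u i) x" for i
  define y where "y a = (\<Sum>i<r. t i * u i a)" for a
  have xy: "dot n x y = (\<Sum>i<r. (t i)\<^sup>2)"
    unfolding y_def dot_sum_right dot_scale_right
    by (simp add: t_def dot_commute power2_eq_square)
  have yy: "dot n y y = (\<Sum>i<r. (t i)\<^sup>2)"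
  proof -
    have "dot n y y = (\<Sum>i<r. t i * (\<Sum>j<r. t j * dot n (u i) (u j)))"
      unfolding y_def[abs_def] dot_sum_right dot_scale_right
      by (simp add: dot_commute[of n "\<lambda>a. \<Sum>i<r. t i * u i a"] dot_sum_right dot_scale_right)
    also have "\<dots> = (\<Sum>i<r. (t i)\<^sup>2)"
      using orthonormal_expansion_coeff[OF assms] by (simp add: power2_eq_square)
    finally show ?thesis .
  qed
  have "0 \<le> dot n (\<lambda>a. x a - y a) (\<lambda>a. x a - y a)" by (rule dot_self_nonneg)
  then show ?thesis unfolding dot_diff_self xy yy t_def by simp
qed

lemma orthonormal_le:
  assumes "orthonormal n r u"
  shows "r \<le> n"
proof -
  text \<open>Bessel's inequality for the \<open>n\<close> standard basis vectors.\<close>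
  define e where "e a b = (if b = a then 1 else (0::real))" for a b :: nat
  have "real r = (\<Sum>i<r. dot n (u i) (u i))"
    using assms unfolding orthonormal_def by simp
  also have "\<dots> = (\<Sum>a<n. \<Sum>i<r. (dot n (u i) (e a))\<^sup>2)"
  proof -
    have "dot n (u i) (e a) = u i a" if "a < n" for i a
      using that by (simp add: dot_def e_def if_distrib cong: if_cong)
    then show ?thesis
      unfolding dot_def[of n "u _" "u _"] by (simp add: sum.swap[of _ "{..<r}"] power2_eq_square)
  qed
  also have "\<dots> \<le> (\<Sum>a<n. dot n (e a) (e a))"
    by (intro sum_mono bessel_inequality[OF assms])
  also have "\<dots> = real n"
    by (simp add: dot_def e_def if_distrib cong: if_cong)
  finally show ?thesis by simp
qed

section \<open>Singular value decomposition by deflation\<close>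

definition matvec :: "nat \<Rightarrow> (nat \<Rightarrow> nat \<Rightarrow> real) \<Rightarrow> (nat \<Rightarrow> real) \<Rightarrow> nat \<Rightarrow> real" where
  "matvec n M y a = (\<Sum>b<n. M a b * y b)"

definition vecmat :: "nat \<Rightarrow> (nat \<Rightarrow> real) \<Rightarrow> (nat \<Rightarrow> nat \<Rightarrow> real) \<Rightarrow> nat \<Rightarrow> real" where
  "vecmat p x M b = (\<Sum>a<p. x a * M a b)"

lemma dot_matvec: "dot p x (matvec n M y) = dot n (vecmat p x M) y"
  unfolding dot_def matvec_def vecmat_def
  by (simp add: sum_distrib_left sum_distrib_right mult_ac sum.swap[of _ "{..<p}"])

lemma matvec_diff_rank_one:
  "matvec n (\<lambda>a b. R a b - s * x a * y b) w a = matvec n R w a - s * x a * dot n y w"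
  unfolding matvec_def dot_def
  by (simp add: left_diff_distrib right_diff_distrib sum_subtractf sum_distrib_left mult_ac)

lemma vecmat_diff_rank_one:
  "vecmat p w (\<lambda>a b. R a b - s * x a * y b) b = vecmat p w R b - s * dot p w x * y b"
  unfolding vecmat_def dot_def
  by (simp add: right_diff_distrib sum_subtractf sum_distrib_left sum_distrib_right mult_ac)

lemma unit_ball_max_aligned:
  assumes max: "\<And>x. dot n x x \<le> 1 \<Longrightarrow> dot n x w \<le> s"
    and u: "dot n u u \<le> 1" and uw: "dot n u w = s" and s: "s > 0"
  shows "(\<forall>a<n. w a = s * u a) \<and> dot n u u = 1"
proof -
  define t where "t = dot n w w"
  have "t \<le> s\<^sup>2"
  proof (cases "t = 0")
    case False
    then have t: "t > 0" using dot_self_nonneg[of n w] unfolding t_def by linarith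
    define x where "x a = w a / sqrt t" for a
    have "dot n x x = 1"
      using t unfolding x_def dot_def t_def by (simp add: sum_divide_distrib[symmetric] power2_eq_square)
    then have "dot n x w \<le> s" by (intro max) simp
    moreover have "dot n x w = sqrt t"
      using t unfolding x_def dot_def t_def by (simp add: sum_divide_distrib[symmetric] real_div_sqrt)
    ultimately have "(sqrt t)\<^sup>2 \<le> s\<^sup>2" using t by (intro power_mono) auto
    then show ?thesis using t by simp
  qed (simp add: t_def)
  moreover have "s * s * dot n u u \<le> s * s"
    using u by (simp add: mult_left_le)
  moreover have "dot n (\<lambda>a. w a - s * u a) (\<lambda>a. w a - s * u a) = t - 2 * (s * s) + s * s * dot n u u"
    unfolding dot_diff_self dot_scale_right dot_scale_left t_def
    using uw by (simp add: dot_commute[of n w u])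
  ultimately have "dot n (\<lambda>a. w a - s * u a) (\<lambda>a. w a - s * u a) \<le> 0"
    by (simp add: power2_eq_square)
  then have w: "\<forall>a<n. w a = s * u a"
    using sq_le_dot_self[of _ n "\<lambda>a. w a - s * u a"] by (metis order_trans eq_iff_diff_eq_0 power2_less_eq_zero_iff)
  then have "s * dot n u u = s"
    using uw dot_cong[of n w "\<lambda>a. s * u a" u] by (simp add: dot_scale_right)
  then show ?thesis using w s by simp
qed

lemma bilinear_form_attains_max:
  "\<exists>u v. dot p u u \<le> 1 \<and> dot n v v \<le> 1 \<and>
     (\<forall>x y. dot p x x \<le> 1 \<longrightarrow> dot n y y \<le> 1 \<longrightarrow>
            dot p x (matvec n M y) \<le> dot p u (matvec n M v))"
proof -
  define S where "S = {(x, y). dot p x x \<le> 1 \<and> dot n y y \<le> 1}"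
  define f where "f z = - dot p (fst z) (matvec n M (snd z))" for z
  define coord where "coord z = case_sum (fst z) (snd z)" for z :: "(nat \<Rightarrow> real) \<times> (nat \<Rightarrow> real)"
  have "\<exists>z\<in>S. \<forall>z'\<in>S. f z \<le> f z'"
  proof (rule attains_inf_bounded_coords[where I = "Inl ` {..<p} \<union> Inr ` {..<n}" and coord = coord and M = 1])
    have "(\<lambda>_. 0, \<lambda>_. 0) \<in> S" unfolding S_def dot_def by simp
    then show "S \<noteq> {}" by blast
    show "\<bar>coord z i\<bar> \<le> 1" if "z \<in> S" "i \<in> Inl ` {..<p} \<union> Inr ` {..<n}" for z i
      using that sq_le_dot_self[of _ p "fst z"] sq_le_dot_self[of _ n "snd z"]
      unfolding S_def coord_def by (force simp flip: abs_square_le_1 intro: order_trans)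
  next
    fix zs assume zs: "\<And>k. zs k \<in> S"
      and cv: "\<And>i. i \<in> Inl ` {..<p} \<union> Inr ` {..<n} \<Longrightarrow> convergent (\<lambda>k. coord (zs k) i)"
    define x where "x a = lim (\<lambda>k. fst (zs k) a)" for a
    define y where "y b = lim (\<lambda>k. snd (zs k) b)" for b
    have x: "(\<lambda>k. fst (zs k) a) \<longlonglongrightarrow> x a" if "a < p" for a
      using cv[of "Inl a"] that unfolding coord_def x_def by (simp add: convergent_LIMSEQ_iff)
    have y: "(\<lambda>k. snd (zs k) b) \<longlonglongrightarrow> y b" if "b < n" for b
      using cv[of "Inr b"] that unfolding coord_def y_def by (simp add: convergent_LIMSEQ_iff)
    have "dot p (fst (zs k)) (fst (zs k)) \<le> 1" "dot n (snd (zs k)) (snd (zs k)) \<le> 1" for k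
      using zs[of k] unfolding S_def by auto
    then have "(x, y) \<in> S"
      using LIMSEQ_le_const2[OF tendsto_dot[OF x x]] LIMSEQ_le_const2[OF tendsto_dot[OF y y]]
      unfolding S_def by auto
    moreover have "(\<lambda>k. f (zs k)) \<longlonglongrightarrow> f (x, y)"
      unfolding f_def matvec_def by (auto intro!: tendsto_minus tendsto_dot tendsto_sum tendsto_mult x y)
    ultimately show "\<exists>z\<in>S. (\<lambda>k. f (zs k)) \<longlonglongrightarrow> f z" by blast
  qed simp
  then obtain u v where "(u, v) \<in> S" and "\<forall>z\<in>S. f (u, v) \<le> f z" by auto
  then show ?thesis unfolding S_def f_def by fastforce
qed

text \<open>A maximiser of \<open>x\<^sup>T M y\<close> over the product of the unit balls is a top singular pair,
  by the equality case of Cauchy-Schwarz.\<close>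

lemma top_singular_pair:
  assumes "a0 < p" and "b0 < n" and "M a0 b0 \<noteq> 0"
  shows "\<exists>s u v. s > 0 \<and> dot p u u = 1 \<and> dot n v v = 1 \<and>
           (\<forall>a<p. matvec n M v a = s * u a) \<and> (\<forall>b<n. vecmat p u M b = s * v b)"
proof -
  obtain u v where u: "dot p u u \<le> 1" and v: "dot n v v \<le> 1"
    and max: "\<And>x y. dot p x x \<le> 1 \<Longrightarrow> dot n y y \<le> 1 \<Longrightarrow>
                dot p x (matvec n M y) \<le> dot p u (matvec n M v)"
    using bilinear_form_attains_max by blast
  define s where "s = dot p u (matvec n M v)"
  have "s > 0"
  proof -
    define x where "x a = (if a = a0 then sgn (M a0 b0) else 0)" for a
    define y where "y b = (if b = b0 then 1 else 0 :: real)" for b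
    have "dot p x x \<le> 1" "dot n y y \<le> 1"
      using assms by (simp_all add: x_def y_def dot_def if_distrib cong: if_cong)
    then have "dot p x (matvec n M y) \<le> s" unfolding s_def by (rule max)
    moreover have "dot p x (matvec n M y) = sgn (M a0 b0) * M a0 b0"
    proof -
      have "matvec n M y a = M a b0" for a
      proof -
        have "matvec n M y a = (\<Sum>b<n. if b = b0 then M a b else 0)"
          unfolding matvec_def y_def by (intro sum.cong) auto
        then show ?thesis using assms by simp
      qed
      then have "dot p x (matvec n M y) = (\<Sum>a<p. if a = a0 then sgn (M a0 b0) * M a b0 else 0)"
        unfolding dot_def x_def by (intro sum.cong) auto
      then show ?thesis using assms by simp
    qed
    ultimately show ?thesis using assms by (simp add: sgn_if split: if_splits)
  qed
  have "(\<forall>a<p. matvec n M v a = s * u a) \<and> dot p u u = 1"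
    by (rule unit_ball_max_aligned[OF _ u _ \<open>s > 0\<close>]) (use max v in \<open>auto simp: s_def\<close>)
  moreover have "(\<forall>b<n. vecmat p u M b = s * v b) \<and> dot n v v = 1"
  proof (rule unit_ball_max_aligned[OF _ v _ \<open>s > 0\<close>])
    show "dot n y (vecmat p u M) \<le> s" if "dot n y y \<le> 1" for y
      using max[OF u that] by (simp add: s_def dot_matvec dot_commute)
  qed (simp add: s_def dot_matvec dot_commute)
  ultimately show ?thesis using \<open>s > 0\<close> by blast
qed

definition rank_one_sum ::
    "nat \<Rightarrow> (nat \<Rightarrow> real) \<Rightarrow> (nat \<Rightarrow> nat \<Rightarrow> real) \<Rightarrow> (nat \<Rightarrow> nat \<Rightarrow> real) \<Rightarrow> nat \<Rightarrow> nat \<Rightarrow> real" where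
  "rank_one_sum r \<sigma> u v a b = (\<Sum>i<r. \<sigma> i * u i a * v i b)"

lemma rank_one_sum_Suc_upd:
  "rank_one_sum (Suc r) (\<sigma>(r := s)) (u(r := x)) (v(r := y)) a b = rank_one_sum r \<sigma> u v a b + s * x a * y b"
proof -
  have "(\<Sum>i<r. (\<sigma>(r := s)) i * (u(r := x)) i a * (v(r := y)) i b) = rank_one_sum r \<sigma> u v a b"
    unfolding rank_one_sum_def by (intro sum.cong) auto
  then show ?thesis unfolding rank_one_sum_def[of "Suc r"] by simp
qed

lemma orthonormal_extend:
  assumes "orthonormal n r u" and "\<And>i. i < r \<Longrightarrow> dot n (u i) x = 0" and "dot n x x = 1"
  shows "orthonormal n (Suc r) (u(r := x))"
  using assms unfolding orthonormal_def by (auto simp: less_Suc_eq dot_commute)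

text \<open>Loop invariant of the deflation.\<close>
definition partial_svd ::
    "nat \<Rightarrow> nat \<Rightarrow> (nat \<Rightarrow> nat \<Rightarrow> real) \<Rightarrow> nat \<Rightarrow> (nat \<Rightarrow> real) \<Rightarrow> (nat \<Rightarrow> nat \<Rightarrow> real) \<Rightarrow> (nat \<Rightarrow> nat \<Rightarrow> real) \<Rightarrow> bool" where
  "partial_svd p n A r \<sigma> u v \<longleftrightarrow>
     orthonormal p r u \<and> orthonormal n r v \<and> (\<forall>i<r. \<sigma> i > 0) \<and>
     (\<forall>i<r. \<forall>a<p. matvec n (\<lambda>a b. A a b - rank_one_sum r \<sigma> u v a b) (v i) a = 0) \<and>
     (\<forall>i<r. \<forall>b<n. vecmat p (u i) (\<lambda>a b. A a b - rank_one_sum r \<sigma> u v a b) b = 0)"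

lemma partial_svd_extend:
  assumes inv: "partial_svd p n A r \<sigma> u v"
    and "a0 < p" and "b0 < n" and "A a0 b0 \<noteq> rank_one_sum r \<sigma> u v a0 b0"
  shows "\<exists>s x y. partial_svd p n A (Suc r) (\<sigma>(r := s)) (u(r := x)) (v(r := y))"
proof -
  define R where "R a b = A a b - rank_one_sum r \<sigma> u v a b" for a b
  obtain s x y where s: "s > 0" and x: "dot p x x = 1" and y: "dot n y y = 1"
    and Ry: "\<forall>a<p. matvec n R y a = s * x a" and xR: "\<forall>b<n. vecmat p x R b = s * y b"
    using top_singular_pair[of a0 p b0 n R] assms(2-4) unfolding R_def by auto
  have Rv: "\<forall>i<r. \<forall>a<p. matvec n R (v i) a = 0" and uR: "\<forall>i<r. \<forall>b<n. vecmat p (u i) R b = 0"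
    using inv unfolding partial_svd_def R_def by auto
  text \<open>The residual annihilates the old singular vectors, so the new ones are orthogonal to them.\<close>
  have ux: "dot p (u i) x = 0" if "i < r" for i
  proof -
    have "s * dot p (u i) x = dot p (u i) (matvec n R y)"
      using Ry dot_cong[of p "matvec n R y" "\<lambda>a. s * x a" "u i"] by (simp add: dot_scale_right)
    also have "\<dots> = 0"
      unfolding dot_matvec using uR that by (simp add: dot_def)
    finally show ?thesis using s by simp
  qed
  have vy: "dot n (v i) y = 0" if "i < r" for i
  proof -
    have "s * dot n (v i) y = dot n (v i) (vecmat p x R)"
      using xR dot_cong[of n "vecmat p x R" "\<lambda>b. s * y b" "v i"] by (simp add: dot_scale_right)
    also have "\<dots> = 0"
      unfolding dot_commute[of n "v i"] dot_matvec[symmetric] using Rv that by (simp add: dot_def)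
    finally show ?thesis using s by simp
  qed
  have R': "(\<lambda>a b. A a b - rank_one_sum (Suc r) (\<sigma>(r := s)) (u(r := x)) (v(r := y)) a b)
          = (\<lambda>a b. R a b - s * x a * y b)"
    unfolding rank_one_sum_Suc_upd R_def by (simp add: algebra_simps)
  have "partial_svd p n A (Suc r) (\<sigma>(r := s)) (u(r := x)) (v(r := y))"
    unfolding partial_svd_def R' matvec_diff_rank_one vecmat_diff_rank_one
    using inv s x y Ry xR Rv uR ux vy
    by (auto simp: partial_svd_def less_Suc_eq orthonormal_extend dot_commute)
  then show ?thesis by blast
qed

lemma rank_one_decomposition:
  "\<exists>r \<sigma> u v. orthonormal p r u \<and> orthonormal n r v \<and> (\<forall>i<r. \<sigma> i > 0) \<and>
     (\<forall>a<p. \<forall>b<n. A a b = rank_one_sum r \<sigma> u v a b)"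
proof -
  have "\<exists>r \<sigma> u v. orthonormal p r u \<and> orthonormal n r v \<and> (\<forall>i<r. \<sigma> i > 0) \<and>
     (\<forall>a<p. \<forall>b<n. A a b = rank_one_sum r \<sigma> u v a b)"
    if "partial_svd p n A r \<sigma> u v" for r \<sigma> u v
    using that
  proof (induction "p - r" arbitrary: r \<sigma> u v rule: less_induct)
    case less
    show ?case
    proof (cases "\<forall>a<p. \<forall>b<n. A a b = rank_one_sum r \<sigma> u v a b")
      case True
      then show ?thesis using less.prems unfolding partial_svd_def by blast
    next
      case False
      then obtain a0 b0 where "a0 < p" "b0 < n" "A a0 b0 \<noteq> rank_one_sum r \<sigma> u v a0 b0" by blast
      then obtain s x y where ext: "partial_svd p n A (Suc r) (\<sigma>(r := s)) (u(r := x)) (v(r := y))"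
        using partial_svd_extend[OF less.prems] by blast
      then have "Suc r \<le> p" using orthonormal_le unfolding partial_svd_def by blast
      then show ?thesis using less.hyps[OF _ ext] by simp
    qed
  qed
  moreover have "partial_svd p n A 0 \<sigma> u v" for \<sigma> u v
    unfolding partial_svd_def orthonormal_def by simp
  ultimately show ?thesis by blast
qed

section \<open>The nuclear norm as a minimum over factorizations\<close>

lemma frob_norm_sq:
  "A \<in> carrier_mat p n \<Longrightarrow> (frob_norm A)\<^sup>2 = (\<Sum>i<p. \<Sum>j<n. (A $$ (i, j))\<^sup>2)"
  unfolding frob_norm_def by (simp add: sum_nonneg)

lemma mat_mult_entry:
  assumes "A \<in> carrier_mat p m" and "B \<in> carrier_mat m n" and "i < p" and "j < n"
  shows "(A * B) $$ (i, j) = (\<Sum>l<m. A $$ (i, l) * B $$ (l, j))"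
  using assms by (simp add: scalar_prod_def atLeast0LessThan)

lemma mult_transpose_entry:
  assumes "W \<in> carrier_mat p m" and "Z \<in> carrier_mat n m" and "a < p" and "b < n"
  shows "(W * transpose_mat Z) $$ (a, b) = (\<Sum>c<m. W $$ (a, c) * Z $$ (b, c))"
proof -
  have "(W * transpose_mat Z) $$ (a, b) = (\<Sum>c<m. W $$ (a, c) * transpose_mat Z $$ (c, b))"
    using assms by (intro mat_mult_entry) auto
  then show ?thesis using assms by simp
qed

definition col_fun :: "real mat \<Rightarrow> nat \<Rightarrow> nat \<Rightarrow> real" where
  "col_fun U i a = U $$ (a, i)"

lemma gram_eq_one_iff_orthonormal:
  assumes U: "U \<in> carrier_mat p r"
  shows "transpose_mat U * U = 1\<^sub>m r \<longleftrightarrow> orthonormal p r (col_fun U)"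
proof -
  have gram: "(transpose_mat U * U) $$ (i, j) = dot p (col_fun U i) (col_fun U j)" if "i < r" "j < r" for i j
  proof -
    have "(transpose_mat U * U) $$ (i, j) = (\<Sum>a<p. transpose_mat U $$ (i, a) * U $$ (a, j))"
      using U that by (intro mat_mult_entry) auto
    then show ?thesis using U that by (simp add: dot_def col_fun_def)
  qed
  show ?thesis
  proof
    assume "transpose_mat U * U = 1\<^sub>m r"
    then show "orthonormal p r (col_fun U)"
      unfolding orthonormal_def using gram by (metis index_one_mat(1))
  next
    assume "orthonormal p r (col_fun U)"
    then show "transpose_mat U * U = 1\<^sub>m r"
      using U gram unfolding orthonormal_def by (intro eq_matI) auto
  qed
qed

lemma diag_product_entry:
  assumes U: "U \<in> carrier_mat p r" and V: "V \<in> carrier_mat n r" and "a < p" and "b < n"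
  shows "(U * mat r r (\<lambda>(i, j). if i = j then \<sigma> i else 0) * transpose_mat V) $$ (a, b)
         = rank_one_sum r \<sigma> (col_fun U) (col_fun V) a b"
proof -
  let ?D = "mat r r (\<lambda>(i, j). if i = j then \<sigma> i else 0)"
  have UD: "(U * ?D) $$ (a, i) = \<sigma> i * U $$ (a, i)" if "i < r" for i
  proof -
    have "(U * ?D) $$ (a, i) = (\<Sum>l<r. U $$ (a, l) * ?D $$ (l, i))"
      using U that \<open>a < p\<close> by (intro mat_mult_entry) auto
    also have "\<dots> = (\<Sum>l<r. if l = i then \<sigma> i * U $$ (a, i) else 0)"
      using that by (intro sum.cong) auto
    finally show ?thesis using that by simp
  qed
  have "U * ?D \<in> carrier_mat p r" using U by simp
  then have "(U * ?D * transpose_mat V) $$ (a, b) = (\<Sum>i<r. (U * ?D) $$ (a, i) * V $$ (b, i))"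
    using assms by (intro mult_transpose_entry)
  also have "\<dots> = rank_one_sum r \<sigma> (col_fun U) (col_fun V) a b"
    unfolding rank_one_sum_def col_fun_def using UD by (intro sum.cong) (simp_all del: index_mult_mat(1))
  finally show ?thesis .
qed

definition compact_svd :: "real mat \<Rightarrow> nat \<Rightarrow> real mat \<Rightarrow> real mat \<Rightarrow> (nat \<Rightarrow> real) \<Rightarrow> bool" where
  "compact_svd A r U V \<sigma> \<longleftrightarrow> U \<in> carrier_mat (dim_row A) r \<and> V \<in> carrier_mat (dim_col A) r \<and>
     transpose_mat U * U = 1\<^sub>m r \<and> transpose_mat V * V = 1\<^sub>m r \<and> (\<forall>i<r. \<sigma> i > 0) \<and>
     A = U * mat r r (\<lambda>(i, j). if i = j then \<sigma> i else 0) * transpose_mat V"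

lemma nuclear_norm_The_compact_svd:
  "nuclear_norm A = (THE s. \<exists>r U V \<sigma>. compact_svd A r U V \<sigma> \<and> s = (\<Sum>i<r. \<sigma> i))"
  unfolding nuclear_norm_def compact_svd_def by (simp add: conj_assoc)

lemma compact_svd_iff:
  assumes "U \<in> carrier_mat (dim_row A) r" and "V \<in> carrier_mat (dim_col A) r"
  shows "compact_svd A r U V \<sigma> \<longleftrightarrow>
           orthonormal (dim_row A) r (col_fun U) \<and> orthonormal (dim_col A) r (col_fun V) \<and>
           (\<forall>i<r. \<sigma> i > 0) \<and>
           (\<forall>a<dim_row A. \<forall>b<dim_col A. A $$ (a, b) = rank_one_sum r \<sigma> (col_fun U) (col_fun V) a b)"
proof -
  have "A = U * mat r r (\<lambda>(i, j). if i = j then \<sigma> i else 0) * transpose_mat V \<longleftrightarrow>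
        (\<forall>a<dim_row A. \<forall>b<dim_col A. A $$ (a, b) = rank_one_sum r \<sigma> (col_fun U) (col_fun V) a b)"
  proof
    assume A: "A = U * mat r r (\<lambda>(i, j). if i = j then \<sigma> i else 0) * transpose_mat V"
    show "\<forall>a<dim_row A. \<forall>b<dim_col A. A $$ (a, b) = rank_one_sum r \<sigma> (col_fun U) (col_fun V) a b"
    proof (intro allI impI)
      fix a b assume "a < dim_row A" "b < dim_col A"
      then show "A $$ (a, b) = rank_one_sum r \<sigma> (col_fun U) (col_fun V) a b"
        using diag_product_entry[OF assms] arg_cong[OF A, of "\<lambda>M. M $$ (a, b)"] by simp
    qed
  next
    assume "\<forall>a<dim_row A. \<forall>b<dim_col A. A $$ (a, b) = rank_one_sum r \<sigma> (col_fun U) (col_fun V) a b"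
    then show "A = U * mat r r (\<lambda>(i, j). if i = j then \<sigma> i else 0) * transpose_mat V"
      using assms diag_product_entry[OF assms] by (intro eq_matI) (simp_all del: index_mult_mat(1))
  qed
  then show ?thesis
    unfolding compact_svd_def using assms gram_eq_one_iff_orthonormal by blast
qed

lemma compact_svd_exists:
  "\<exists>r U V \<sigma>. compact_svd A r U V \<sigma> \<and> r \<le> dim_row A \<and> r \<le> dim_col A"
proof -
  obtain r \<sigma> u v where u: "orthonormal (dim_row A) r u" and v: "orthonormal (dim_col A) r v"
    and \<sigma>: "\<forall>i<r. \<sigma> i > 0"
    and A: "\<forall>a<dim_row A. \<forall>b<dim_col A. A $$ (a, b) = rank_one_sum r \<sigma> u v a b"
    using rank_one_decomposition[of "dim_row A" "dim_col A" "\<lambda>a b. A $$ (a, b)"] by blast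
  define U where "U = mat (dim_row A) r (\<lambda>(a, i). u i a)"
  define V where "V = mat (dim_col A) r (\<lambda>(b, i). v i b)"
  have U: "U \<in> carrier_mat (dim_row A) r" and V: "V \<in> carrier_mat (dim_col A) r"
    unfolding U_def V_def by auto
  have "orthonormal (dim_row A) r (col_fun U)"
    using u unfolding orthonormal_def dot_def U_def col_fun_def by simp
  moreover have "orthonormal (dim_col A) r (col_fun V)"
    using v unfolding orthonormal_def dot_def V_def col_fun_def by simp
  moreover have "rank_one_sum r \<sigma> (col_fun U) (col_fun V) a b = rank_one_sum r \<sigma> u v a b"
    if "a < dim_row A" "b < dim_col A" for a b
    using that unfolding rank_one_sum_def U_def V_def col_fun_def by simp
  ultimately have "compact_svd A r U V \<sigma>"
    using compact_svd_iff[OF U V] \<sigma> A by simp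
  then show ?thesis
    using orthonormal_le[OF u] orthonormal_le[OF v] by blast
qed

lemma rank_one_sum_le_factor:
  assumes u: "orthonormal p r u" and v: "orthonormal n r v"
    and eq: "\<And>a b. a < p \<Longrightarrow> b < n \<Longrightarrow> rank_one_sum r \<sigma> u v a b = (\<Sum>c<m. w a c * z b c)"
  shows "(\<Sum>i<r. \<sigma> i) \<le> ((\<Sum>a<p. \<Sum>c<m. (w a c)\<^sup>2) + (\<Sum>b<n. \<Sum>c<m. (z b c)\<^sup>2)) / 2"
proof -
  define \<alpha> where "\<alpha> i c = dot p (u i) (\<lambda>a. w a c)" for i c
  define \<beta> where "\<beta> i c = dot n (v i) (\<lambda>b. z b c)" for i c
  text \<open>\<open>\<sigma> i = u\<^sub>i\<^sup>T A v\<^sub>i\<close>, evaluated on both sides of the factorization.\<close>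
  have \<sigma>: "\<sigma> i = (\<Sum>c<m. \<alpha> i c * \<beta> i c)" if i: "i < r" for i
  proof -
    have "dot n (v i) (\<lambda>b. rank_one_sum r \<sigma> u v a b) = \<sigma> i * u i a" for a
      unfolding rank_one_sum_def dot_sum_right dot_scale_right
      by (rule orthonormal_expansion_coeff[OF v i])
    then have "dot p (u i) (\<lambda>a. dot n (v i) (\<lambda>b. rank_one_sum r \<sigma> u v a b)) = \<sigma> i"
      using u i unfolding orthonormal_def by (simp add: dot_scale_right)
    moreover have "dot p (u i) (\<lambda>a. dot n (v i) (\<lambda>b. rank_one_sum r \<sigma> u v a b))
                 = dot p (u i) (\<lambda>a. dot n (v i) (\<lambda>b. \<Sum>c<m. w a c * z b c))"
      using eq by (intro dot_cong) simp
    moreover have "\<dots> = (\<Sum>c<m. \<alpha> i c * \<beta> i c)"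
      unfolding \<alpha>_def \<beta>_def dot_sum_right dot_scale_right dot_mult_const_right
      by (simp add: dot_commute[of n "v i"])
    ultimately show ?thesis by simp
  qed
  have "(\<Sum>i<r. \<sigma> i) = (\<Sum>i<r. \<Sum>c<m. \<alpha> i c * \<beta> i c)"
    using \<sigma> by simp
  also have "\<dots> \<le> (\<Sum>i<r. \<Sum>c<m. ((\<alpha> i c)\<^sup>2 + (\<beta> i c)\<^sup>2) / 2)"
    using sum_squares_bound[of "\<alpha> _ _" "\<beta> _ _"] by (intro sum_mono) (simp add: field_simps)
  also have "\<dots> = ((\<Sum>c<m. \<Sum>i<r. (dot p (u i) (\<lambda>a. w a c))\<^sup>2) + (\<Sum>c<m. \<Sum>i<r. (dot n (v i) (\<lambda>b. z b c))\<^sup>2)) / 2"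
    unfolding \<alpha>_def \<beta>_def by (simp add: sum.distrib sum_divide_distrib[symmetric] sum.swap[of _ "{..<r}"])
  also have "\<dots> \<le> ((\<Sum>c<m. \<Sum>a<p. (w a c)\<^sup>2) + (\<Sum>c<m. \<Sum>b<n. (z b c)\<^sup>2)) / 2"
    using bessel_inequality[OF u] bessel_inequality[OF v]
    by (intro divide_right_mono add_mono sum_mono) (auto simp: dot_def power2_eq_square)
  finally show ?thesis by (simp add: sum.swap[of _ "{..<m}"])
qed

lemma compact_svd_sum_le_factor:
  assumes svd: "compact_svd (W * transpose_mat Z) r U V \<sigma>"
    and W: "W \<in> carrier_mat p m" and Z: "Z \<in> carrier_mat n m"
  shows "(\<Sum>i<r. \<sigma> i) \<le> ((frob_norm W)\<^sup>2 + (frob_norm Z)\<^sup>2) / 2"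
proof -
  have "U \<in> carrier_mat (dim_row (W * transpose_mat Z)) r" "V \<in> carrier_mat (dim_col (W * transpose_mat Z)) r"
    using svd unfolding compact_svd_def by auto
  then have u: "orthonormal p r (col_fun U)" and v: "orthonormal n r (col_fun V)"
    and entries: "\<And>a b. a < p \<Longrightarrow> b < n \<Longrightarrow>
        (W * transpose_mat Z) $$ (a, b) = rank_one_sum r \<sigma> (col_fun U) (col_fun V) a b"
    using svd W Z by (simp_all add: compact_svd_iff)
  then have "(\<Sum>i<r. \<sigma> i) \<le> ((\<Sum>a<p. \<Sum>c<m. (W $$ (a, c))\<^sup>2) + (\<Sum>b<n. \<Sum>c<m. (Z $$ (b, c))\<^sup>2)) / 2"
    by (intro rank_one_sum_le_factor[OF u v]) (simp add: mult_transpose_entry[OF W Z] flip: entries)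
  then show ?thesis by (simp add: frob_norm_sq[OF W] frob_norm_sq[OF Z])
qed

lemma sum_lessThan_padded:
  fixes r m :: nat
  assumes "r \<le> m"
  shows "(\<Sum>c<m. if c < r then f c else 0) = (\<Sum>c<r. f c)"
proof -
  have "{..<m} \<inter> {..<r} = {..<r}" using assms by auto
  then show ?thesis using sum.inter_restrict[of "{..<m}" f "{..<r}"] by simp
qed

text \<open>\<open>X diag(\<surd>\<sigma>)\<close> padded with zero columns to width \<open>m\<close>: the pair
  \<open>U diag(\<surd>\<sigma>), V diag(\<surd>\<sigma>)\<close> attains the bound of \<open>compact_svd_sum_le_factor\<close>.\<close>

definition balanced_factor :: "real mat \<Rightarrow> nat \<Rightarrow> (nat \<Rightarrow> real) \<Rightarrow> nat \<Rightarrow> real mat" where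
  "balanced_factor X r \<sigma> m = mat (dim_row X) m (\<lambda>(a, c). if c < r then X $$ (a, c) * sqrt (\<sigma> c) else 0)"

lemma balanced_factor_carrier: "balanced_factor X r \<sigma> m \<in> carrier_mat (dim_row X) m"
  unfolding balanced_factor_def by simp

lemma frob_norm_balanced_factor:
  assumes "orthonormal (dim_row X) r (col_fun X)" and "\<forall>i<r. \<sigma> i > 0" and "r \<le> m"
  shows "(frob_norm (balanced_factor X r \<sigma> m))\<^sup>2 = (\<Sum>i<r. \<sigma> i)"
proof -
  let ?k = "dim_row X"
  have "(frob_norm (balanced_factor X r \<sigma> m))\<^sup>2
      = (\<Sum>a<?k. \<Sum>c<m. (if c < r then X $$ (a, c) * sqrt (\<sigma> c) else 0)\<^sup>2)"
    unfolding frob_norm_sq[OF balanced_factor_carrier] by (simp add: balanced_factor_def)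
  also have "\<dots> = (\<Sum>a<?k. \<Sum>c<m. if c < r then \<sigma> c * (X $$ (a, c))\<^sup>2 else 0)"
    using assms(2) by (intro sum.cong refl) (simp add: power_mult_distrib less_imp_le)
  also have "\<dots> = (\<Sum>a<?k. \<Sum>c<r. \<sigma> c * (X $$ (a, c))\<^sup>2)"
    using assms(3) by (simp add: sum_lessThan_padded)
  also have "\<dots> = (\<Sum>c<r. \<sigma> c * dot ?k (col_fun X c) (col_fun X c))"
    by (simp add: dot_def col_fun_def sum_distrib_left power2_eq_square sum.swap[of _ "{..<?k}"])
  also have "\<dots> = (\<Sum>i<r. \<sigma> i)"
    using assms(1) unfolding orthonormal_def by simp
  finally show ?thesis .
qed

lemma balanced_factor_product_entry:
  assumes "\<forall>i<r. \<sigma> i > 0" and "r \<le> m" and "a < dim_row U" and "b < dim_row V"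
  shows "(balanced_factor U r \<sigma> m * transpose_mat (balanced_factor V r \<sigma> m)) $$ (a, b)
         = rank_one_sum r \<sigma> (col_fun U) (col_fun V) a b"
proof -
  have "(balanced_factor U r \<sigma> m * transpose_mat (balanced_factor V r \<sigma> m)) $$ (a, b)
      = (\<Sum>c<m. balanced_factor U r \<sigma> m $$ (a, c) * balanced_factor V r \<sigma> m $$ (b, c))"
    by (rule mult_transpose_entry[OF balanced_factor_carrier balanced_factor_carrier assms(3,4)])
  also have "\<dots> = (\<Sum>c<m. if c < r then \<sigma> c * U $$ (a, c) * V $$ (b, c) else 0)"
  proof (intro sum.cong refl)
    fix c assume "c \<in> {..<m}"
    moreover have "sqrt (\<sigma> c) * sqrt (\<sigma> c) = \<sigma> c" if "c < r"
      using assms(1) that by (simp add: less_imp_le)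
    ultimately show "balanced_factor U r \<sigma> m $$ (a, c) * balanced_factor V r \<sigma> m $$ (b, c)
        = (if c < r then \<sigma> c * U $$ (a, c) * V $$ (b, c) else 0)"
      using assms(3,4) unfolding balanced_factor_def by (simp add: algebra_simps)
  qed
  also have "\<dots> = rank_one_sum r \<sigma> (col_fun U) (col_fun V) a b"
    using assms(2) by (simp add: sum_lessThan_padded rank_one_sum_def col_fun_def)
  finally show ?thesis .
qed

lemma compact_svd_balanced_factor:
  assumes svd: "compact_svd A r U V \<sigma>" and "r \<le> m"
  shows "\<exists>W Z. W \<in> carrier_mat (dim_row A) m \<and> Z \<in> carrier_mat (dim_col A) m \<and>
           A = W * transpose_mat Z \<and>
           ((frob_norm W)\<^sup>2 + (frob_norm Z)\<^sup>2) / 2 = (\<Sum>i<r. \<sigma> i)"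
proof -
  have U: "U \<in> carrier_mat (dim_row A) r" and V: "V \<in> carrier_mat (dim_col A) r"
    using svd unfolding compact_svd_def by auto
  then have dims: "dim_row U = dim_row A" "dim_row V = dim_col A" by auto
  have "orthonormal (dim_row A) r (col_fun U)" "orthonormal (dim_col A) r (col_fun V)"
    and \<sigma>: "\<forall>i<r. \<sigma> i > 0"
    and A: "\<forall>a<dim_row A. \<forall>b<dim_col A. A $$ (a, b) = rank_one_sum r \<sigma> (col_fun U) (col_fun V) a b"
    using svd compact_svd_iff[OF U V] by blast+
  then have u: "orthonormal (dim_row U) r (col_fun U)" and v: "orthonormal (dim_row V) r (col_fun V)"
    by (simp_all add: dims)
  let ?W = "balanced_factor U r \<sigma> m" and ?Z = "balanced_factor V r \<sigma> m"
  have W: "?W \<in> carrier_mat (dim_row A) m" and Z: "?Z \<in> carrier_mat (dim_col A) m"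
    using balanced_factor_carrier[of U r \<sigma> m] balanced_factor_carrier[of V r \<sigma> m] unfolding dims .
  have "A = ?W * transpose_mat ?Z"
  proof (rule eq_matI)
    fix a b assume "a < dim_row (?W * transpose_mat ?Z)" and "b < dim_col (?W * transpose_mat ?Z)"
    then have a: "a < dim_row A" and b: "b < dim_col A"
      using W Z by auto
    have "A $$ (a, b) = rank_one_sum r \<sigma> (col_fun U) (col_fun V) a b"
      using A a b by blast
    also have "\<dots> = (?W * transpose_mat ?Z) $$ (a, b)"
      using a b unfolding dims[symmetric] by (rule balanced_factor_product_entry[OF \<sigma> \<open>r \<le> m\<close>, symmetric])
    finally show "A $$ (a, b) = (?W * transpose_mat ?Z) $$ (a, b)" .
  qed (use W Z in \<open>simp_all add: carrier_matD\<close>)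
  moreover have "((frob_norm ?W)\<^sup>2 + (frob_norm ?Z)\<^sup>2) / 2 = (\<Sum>i<r. \<sigma> i)"
    using frob_norm_balanced_factor[OF u \<sigma> \<open>r \<le> m\<close>] frob_norm_balanced_factor[OF v \<sigma> \<open>r \<le> m\<close>]
    by simp
  ultimately show ?thesis
    using W Z by blast
qed

text \<open>The description in \<open>nuclear_norm_def\<close> is unambiguous: each compact SVD's singular value sum
  is bounded by the balanced factorization of any other.\<close>

lemma nuclear_norm_compact_svd:
  assumes svd: "compact_svd A r U V \<sigma>"
  shows "nuclear_norm A = (\<Sum>i<r. \<sigma> i)"
  unfolding nuclear_norm_The_compact_svd
proof (rule the_equality)
  show "\<exists>r' U' V' \<sigma>'. compact_svd A r' U' V' \<sigma>' \<and> (\<Sum>i<r. \<sigma> i) = (\<Sum>i<r'. \<sigma>' i)"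
    using svd by blast
  have le: "(\<Sum>i<r1. \<sigma>1 i) \<le> (\<Sum>i<r2. \<sigma>2 i)"
    if svd1: "compact_svd A r1 U1 V1 \<sigma>1" and svd2: "compact_svd A r2 U2 V2 \<sigma>2" for r1 U1 V1 \<sigma>1 r2 U2 V2 \<sigma>2
  proof -
    obtain W Z where W: "W \<in> carrier_mat (dim_row A) r2" and Z: "Z \<in> carrier_mat (dim_col A) r2"
      and A: "A = W * transpose_mat Z" and WZ: "((frob_norm W)\<^sup>2 + (frob_norm Z)\<^sup>2) / 2 = (\<Sum>i<r2. \<sigma>2 i)"
      using compact_svd_balanced_factor[OF svd2 order_refl] by blast
    show ?thesis
      using compact_svd_sum_le_factor[OF _ W Z] svd1 A WZ by simp
  qed
  fix s assume "\<exists>r' U' V' \<sigma>'. compact_svd A r' U' V' \<sigma>' \<and> s = (\<Sum>i<r'. \<sigma>' i)"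
  then show "s = (\<Sum>i<r. \<sigma> i)"
    using le[OF _ svd] le[OF svd] by (metis order_antisym)
qed

lemma nuclear_norm_le_factor:
  assumes "W \<in> carrier_mat p m" and "Z \<in> carrier_mat n m"
  shows "nuclear_norm (W * transpose_mat Z) \<le> ((frob_norm W)\<^sup>2 + (frob_norm Z)\<^sup>2) / 2"
proof -
  obtain r U V \<sigma> where "compact_svd (W * transpose_mat Z) r U V \<sigma>"
    using compact_svd_exists by blast
  then show ?thesis
    using compact_svd_sum_le_factor[OF _ assms] by (simp add: nuclear_norm_compact_svd)
qed

lemma nuclear_norm_balanced_factor:
  assumes "A \<in> carrier_mat p n" and "min p n \<le> m"
  shows "\<exists>W Z. W \<in> carrier_mat p m \<and> Z \<in> carrier_mat n m \<and> A = W * transpose_mat Z \<and>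
           ((frob_norm W)\<^sup>2 + (frob_norm Z)\<^sup>2) / 2 = nuclear_norm A"
proof -
  obtain r U V \<sigma> where svd: "compact_svd A r U V \<sigma>" and "r \<le> p" "r \<le> n"
    using compact_svd_exists[of A] assms(1) by auto
  then have "r \<le> m" using assms(2) by simp
  then show ?thesis
    using compact_svd_balanced_factor[OF svd] assms(1) by (simp add: nuclear_norm_compact_svd[OF svd])
qed

definition mat_tendsto :: "(nat \<Rightarrow> real mat) \<Rightarrow> real mat \<Rightarrow> nat \<Rightarrow> nat \<Rightarrow> bool" where
  "mat_tendsto As A p n \<longleftrightarrow> A \<in> carrier_mat p n \<and> (\<forall>k. As k \<in> carrier_mat p n) \<and>
     (\<forall>i<p. \<forall>j<n. (\<lambda>k. As k $$ (i, j)) \<longlonglongrightarrow> A $$ (i, j))"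

lemma mat_tendsto_const: "A \<in> carrier_mat p n \<Longrightarrow> mat_tendsto (\<lambda>k. A) A p n"
  unfolding mat_tendsto_def by auto

lemma mat_tendsto_lim:
  assumes "\<And>k. As k \<in> carrier_mat p n"
    and "\<And>i j. i < p \<Longrightarrow> j < n \<Longrightarrow> convergent (\<lambda>k. As k $$ (i, j))"
  shows "mat_tendsto As (mat p n (\<lambda>(i, j). lim (\<lambda>k. As k $$ (i, j)))) p n"
  using assms unfolding mat_tendsto_def by (simp add: convergent_LIMSEQ_iff)

lemma mat_tendsto_mult:
  assumes "mat_tendsto As A p m" and "mat_tendsto Bs B m n"
  shows "mat_tendsto (\<lambda>k. As k * Bs k) (A * B) p n"
proof -
  have A: "A \<in> carrier_mat p m" and B: "B \<in> carrier_mat m n"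
    and As: "\<And>k. As k \<in> carrier_mat p m" and Bs: "\<And>k. Bs k \<in> carrier_mat m n"
    using assms unfolding mat_tendsto_def by auto
  have "(\<lambda>k. (As k * Bs k) $$ (i, j)) \<longlonglongrightarrow> (A * B) $$ (i, j)" if "i < p" "j < n" for i j
    unfolding mat_mult_entry[OF As Bs that] mat_mult_entry[OF A B that]
    using assms that unfolding mat_tendsto_def by (intro tendsto_sum tendsto_mult) auto
  then show ?thesis
    unfolding mat_tendsto_def using A B As Bs by (meson mult_carrier_mat)
qed

lemma mat_tendsto_transpose:
  assumes "mat_tendsto As A p n"
  shows "mat_tendsto (\<lambda>k. transpose_mat (As k)) (transpose_mat A) n p"
proof -
  have As: "As k \<in> carrier_mat p n" for k
    using assms unfolding mat_tendsto_def by auto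
  have "(\<lambda>k. transpose_mat (As k) $$ (i, j)) = (\<lambda>k. As k $$ (j, i))" if "i < n" "j < p" for i j
    using that As by (intro ext) (metis carrier_matD index_transpose_mat(1))
  then show ?thesis
    using assms unfolding mat_tendsto_def by auto
qed

lemma tendsto_frob_norm_sq:
  assumes "mat_tendsto As A p n"
  shows "(\<lambda>k. (frob_norm (As k))\<^sup>2) \<longlonglongrightarrow> (frob_norm A)\<^sup>2"
proof -
  have A: "A \<in> carrier_mat p n" and As: "\<And>k. As k \<in> carrier_mat p n"
    and lim: "\<And>i j. i < p \<Longrightarrow> j < n \<Longrightarrow> (\<lambda>k. As k $$ (i, j)) \<longlonglongrightarrow> A $$ (i, j)"
    using assms unfolding mat_tendsto_def by auto
  have "(\<lambda>k. \<Sum>i<p. \<Sum>j<n. (As k $$ (i, j))\<^sup>2) \<longlonglongrightarrow> (\<Sum>i<p. \<Sum>j<n. (A $$ (i, j))\<^sup>2)"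
    by (intro tendsto_sum tendsto_power lim) auto
  then show ?thesis
    unfolding frob_norm_sq[OF A] frob_norm_sq[OF As] .
qed

lemma abs_entry_le_frob_norm_sq:
  assumes "A \<in> carrier_mat p n" and "i < p" and "j < n"
  shows "\<bar>A $$ (i, j)\<bar> \<le> 1 + (frob_norm A)\<^sup>2"
proof -
  have "(A $$ (i, j))\<^sup>2 \<le> (\<Sum>j'<n. (A $$ (i, j'))\<^sup>2)"
    using assms by (intro member_le_sum) auto
  also have "\<dots> \<le> (frob_norm A)\<^sup>2"
    unfolding frob_norm_sq[OF assms(1)] using assms by (intro member_le_sum[of i "{..<p}"] sum_nonneg) auto
  finally have "(A $$ (i, j))\<^sup>2 \<le> (frob_norm A)\<^sup>2" .
  moreover have "\<bar>A $$ (i, j)\<bar> \<le> 1 + (A $$ (i, j))\<^sup>2"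
    using sum_squares_bound[of "\<bar>A $$ (i, j)\<bar>" 1] by (simp add: power2_eq_square)
  ultimately show ?thesis by linarith
qed

section \<open>The two regularized problems\<close>

lemma is_arg_min_correspondence:
  fixes F :: "'a \<Rightarrow> real" and G :: "'b \<Rightarrow> real"
  assumes G_min: "is_arg_min G (\<lambda>z. z \<in> Gs) z0"
    and related: "\<And>z. z \<in> Gs \<Longrightarrow> \<exists>w\<in>Fs. R z w"
    and F_le_G: "\<And>z w. z \<in> Gs \<Longrightarrow> w \<in> Fs \<Longrightarrow> R z w \<Longrightarrow> F w \<le> G z"
    and G_le_F: "\<And>w. w \<in> Fs \<Longrightarrow> \<exists>z\<in>Gs. R z w \<and> G z \<le> F w"
  shows "(\<exists>w. is_arg_min F (\<lambda>w. w \<in> Fs) w) \<and> Inf (F ` Fs) = Inf (G ` Gs) \<and>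
         (\<forall>w\<in>Fs. is_arg_min F (\<lambda>w. w \<in> Fs) w \<longleftrightarrow> (\<exists>z. is_arg_min G (\<lambda>z. z \<in> Gs) z \<and> R z w))"
proof -
  have z0: "z0 \<in> Gs" and G_ge: "\<And>z. z \<in> Gs \<Longrightarrow> G z0 \<le> G z"
    using G_min unfolding is_arg_min_linorder by auto
  have F_ge: "G z0 \<le> F w" if "w \<in> Fs" for w
    using G_le_F[OF that] G_ge by force
  obtain w0 where w0: "w0 \<in> Fs" "R z0 w0"
    using related[OF z0] by blast
  then have "F w0 = G z0"
    using F_le_G[OF z0] F_ge by (simp add: order_antisym)
  then have F_min: "is_arg_min F (\<lambda>w. w \<in> Fs) w0"
    unfolding is_arg_min_linorder using w0 F_ge by auto
  have "Inf (F ` Fs) = G z0"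
    using w0 F_ge by (intro cInf_eq_minimum) (auto simp flip: \<open>F w0 = G z0\<close>)
  moreover have "Inf (G ` Gs) = G z0"
    using z0 G_ge by (intro cInf_eq_minimum) auto
  moreover have "is_arg_min F (\<lambda>w. w \<in> Fs) w \<longleftrightarrow> (\<exists>z. is_arg_min G (\<lambda>z. z \<in> Gs) z \<and> R z w)"
    if w: "w \<in> Fs" for w
  proof
    assume "is_arg_min F (\<lambda>w. w \<in> Fs) w"
    then have "F w \<le> G z0"
      using F_min \<open>F w0 = G z0\<close> unfolding is_arg_min_linorder by force
    moreover obtain z where "z \<in> Gs" "R z w" "G z \<le> F w"
      using G_le_F[OF w] by blast
    ultimately show "\<exists>z. is_arg_min G (\<lambda>z. z \<in> Gs) z \<and> R z w"
      unfolding is_arg_min_linorder using G_ge by (meson order_trans)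
  next
    assume "\<exists>z. is_arg_min G (\<lambda>z. z \<in> Gs) z \<and> R z w"
    then obtain z where "is_arg_min G (\<lambda>z. z \<in> Gs) z" "R z w" by blast
    then have "F w \<le> G z0"
      using F_le_G[OF _ w] G_ge z0 unfolding is_arg_min_linorder by (meson order_trans)
    then show "is_arg_min F (\<lambda>w. w \<in> Fs) w"
      unfolding is_arg_min_linorder using w F_ge by (meson order_trans)
  qed
  ultimately show ?thesis using F_min by auto
qed

lemma residual_cong:
  assumes "\<And>k. k < K \<Longrightarrow> B k = B' k" and "\<And>l. l < L \<Longrightarrow> S l = S' l"
  shows "residual X K Yk B L S = residual X K Yk B' L S'"
proof -
  have "(\<Sum>k<K. (B k * Yk k) $$ ic) = (\<Sum>k<K. (B' k * Yk k) $$ ic)"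
    and "(\<Sum>l<L. S l $$ ic) = (\<Sum>l<L. S' l $$ ic)" for ic
    using assms by (auto intro!: sum.cong)
  then show ?thesis unfolding residual_def by simp
qed

lemma mat_tendsto_residual:
  assumes "X \<in> carrier_mat p n"
    and "\<And>k. k < K \<Longrightarrow> mat_tendsto (\<lambda>m. Bs m k * Yk k) (B k * Yk k) p n"
    and "\<And>l. l < L \<Longrightarrow> mat_tendsto (\<lambda>m. Ss m l) (S l) p n"
  shows "mat_tendsto (\<lambda>m. residual X K Yk (Bs m) L (Ss m)) (residual X K Yk B L S) p n"
  using assms unfolding mat_tendsto_def residual_def
  by (auto intro!: tendsto_diff tendsto_sum)

lemma zero_in_Sset: "0\<^sub>m p n \<in> Sset nj CS p n l"
  unfolding Sset_def by simp

lemma Sset_closed: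
  assumes "\<And>k. As k \<in> Sset nj CS p n l" and "mat_tendsto As A p n"
  shows "A \<in> Sset nj CS p n l"
proof -
  have "A $$ (i, c) = 0" if "i < p" "c < n" "\<not> CS (cohort nj c) l" for i c
  proof -
    have "(\<lambda>k. As k $$ (i, c)) \<longlonglongrightarrow> A $$ (i, c)"
      using assms(2) that unfolding mat_tendsto_def by blast
    moreover have "As k $$ (i, c) = 0" for k
      using assms(1)[of k] that unfolding Sset_def by blast
    ultimately show ?thesis
      by (simp add: LIMSEQ_const_iff)
  qed
  then show ?thesis
    using assms(2) unfolding Sset_def mat_tendsto_def by blast
qed

lemma balanced_factor_family:
  assumes "\<And>k. k < K \<Longrightarrow> B k \<in> carrier_mat p q" and "min p q \<le> r"
  shows "\<exists>U V. \<forall>k<K. U k \<in> carrier_mat p r \<and> V k \<in> carrier_mat q r \<and> B k = U k * transpose_mat (V k) \<and>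
                  ((frob_norm (U k))\<^sup>2 + (frob_norm (V k))\<^sup>2) / 2 = nuclear_norm (B k)"
proof -
  have "\<forall>k. \<exists>U V. k < K \<longrightarrow> U \<in> carrier_mat p r \<and> V \<in> carrier_mat q r \<and> B k = U * transpose_mat V \<and>
                  ((frob_norm U)\<^sup>2 + (frob_norm V)\<^sup>2) / 2 = nuclear_norm (B k)"
    using nuclear_norm_balanced_factor assms by blast
  then show ?thesis by metis
qed

definition factorizes :: "nat \<Rightarrow> nat
    \<Rightarrow> (nat \<Rightarrow> real mat) \<times> (nat \<Rightarrow> real mat) \<times> (nat \<Rightarrow> real mat) \<times> (nat \<Rightarrow> real mat)
    \<Rightarrow> (nat \<Rightarrow> real mat) \<times> (nat \<Rightarrow> real mat) \<Rightarrow> bool" where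
  "factorizes K L = (\<lambda>(UB, VB, US, VS) (B, S).
     (\<forall>k<K. B k = UB k * transpose_mat (VB k)) \<and> (\<forall>l<L. S l = US l * transpose_mat (VS l)))"

lemma ex_factorizes_iff:
  "(\<exists>z. P z \<and> factorizes K L z (B, S)) \<longleftrightarrow>
   (\<exists>UB VB US VS. P (UB, VB, US, VS) \<and>
      (\<forall>k<K. B k = UB k * transpose_mat (VB k)) \<and> (\<forall>l<L. S l = US l * transpose_mat (VS l)))"
  unfolding factorizes_def by auto

lemma factorizes_feasible:
  assumes "z \<in> G_feas nj CS p q n rB rS K L"
  shows "\<exists>w\<in>F_feas nj CS p q n K L. factorizes K L z w"
proof -
  obtain UB VB US VS where z: "z = (UB, VB, US, VS)" by (cases z) auto
  have "((\<lambda>k. UB k * transpose_mat (VB k)), (\<lambda>l. US l * transpose_mat (VS l))) \<in> F_feas nj CS p q n K L"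
    using assms unfolding z G_feas_def F_feas_def by auto
  then show ?thesis unfolding z factorizes_def by auto
qed

lemma F_obj_le_G_obj:
  assumes lamB: "\<forall>k<K. lamB k > 0" and lamS: "\<forall>l<L. lamS l > 0"
    and z: "z \<in> G_feas nj CS p q n rB rS K L" and zw: "factorizes K L z w"
  shows "F_obj nj CY X Y K L lamB lamS w \<le> G_obj nj CY X Y K L lamB lamS z"
proof -
  obtain UB VB US VS B S where z_eq: "z = (UB, VB, US, VS)" and w_eq: "w = (B, S)"
    by (cases z, cases w) auto
  have B: "\<forall>k<K. B k = UB k * transpose_mat (VB k)" and S: "\<forall>l<L. S l = US l * transpose_mat (VS l)"
    using zw unfolding z_eq w_eq factorizes_def by auto
  have "nuclear_norm (B k) \<le> ((frob_norm (UB k))\<^sup>2 + (frob_norm (VB k))\<^sup>2) / 2" if "k < K" for k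
    using nuclear_norm_le_factor z B that unfolding z_eq G_feas_def by auto
  then have "(\<Sum>k<K. lamB k * nuclear_norm (B k))
      \<le> (\<Sum>k<K. lamB k * ((frob_norm (UB k))\<^sup>2 + (frob_norm (VB k))\<^sup>2)) / 2"
    unfolding sum_divide_distrib using lamB by (intro sum_mono) (simp add: mult_left_mono)
  moreover have "nuclear_norm (S l) \<le> ((frob_norm (US l))\<^sup>2 + (frob_norm (VS l))\<^sup>2) / 2" if "l < L" for l
    using nuclear_norm_le_factor z S that unfolding z_eq G_feas_def by auto
  then have "(\<Sum>l<L. lamS l * nuclear_norm (S l))
      \<le> (\<Sum>l<L. lamS l * ((frob_norm (US l))\<^sup>2 + (frob_norm (VS l))\<^sup>2)) / 2"
    unfolding sum_divide_distrib using lamS by (intro sum_mono) (simp add: mult_left_mono)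
  moreover have "residual X K (masked_Y nj CY Y) B L S
      = residual X K (masked_Y nj CY Y) (\<lambda>k. UB k * transpose_mat (VB k)) L (\<lambda>l. US l * transpose_mat (VS l))"
    using B S by (intro residual_cong) auto
  ultimately show ?thesis
    unfolding F_obj_def G_obj_def z_eq w_eq by simp
qed

lemma G_obj_eq_F_obj_balanced:
  assumes w: "w \<in> F_feas nj CS p q n K L" and "min p q \<le> rB" and "min p n \<le> rS"
  shows "\<exists>z\<in>G_feas nj CS p q n rB rS K L. factorizes K L z w \<and>
           G_obj nj CY X Y K L lamB lamS z = F_obj nj CY X Y K L lamB lamS w"
proof -
  obtain B S where w_eq: "w = (B, S)" by (cases w)
  obtain UB VB where B: "\<forall>k<K. UB k \<in> carrier_mat p rB \<and> VB k \<in> carrier_mat q rB \<and>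
      B k = UB k * transpose_mat (VB k) \<and> ((frob_norm (UB k))\<^sup>2 + (frob_norm (VB k))\<^sup>2) / 2 = nuclear_norm (B k)"
    using balanced_factor_family[of K B p q rB] w assms(2) unfolding w_eq F_feas_def by auto
  obtain US VS where S: "\<forall>l<L. US l \<in> carrier_mat p rS \<and> VS l \<in> carrier_mat n rS \<and>
      S l = US l * transpose_mat (VS l) \<and> ((frob_norm (US l))\<^sup>2 + (frob_norm (VS l))\<^sup>2) / 2 = nuclear_norm (S l)"
    using balanced_factor_family[of L S p n rS] w assms(3) unfolding w_eq F_feas_def Sset_def by auto
  have "(UB, VB, US, VS) \<in> G_feas nj CS p q n rB rS K L"
    using B S w unfolding w_eq G_feas_def F_feas_def by auto
  moreover have "factorizes K L (UB, VB, US, VS) w"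
    using B S unfolding w_eq factorizes_def by auto
  moreover have "residual X K (masked_Y nj CY Y) B L S
      = residual X K (masked_Y nj CY Y) (\<lambda>k. UB k * transpose_mat (VB k)) L (\<lambda>l. US l * transpose_mat (VS l))"
    using B S by (intro residual_cong) auto
  moreover have "(\<Sum>k<K. lamB k * ((frob_norm (UB k))\<^sup>2 + (frob_norm (VB k))\<^sup>2)) = 2 * (\<Sum>k<K. lamB k * nuclear_norm (B k))"
    unfolding sum_distrib_left by (rule sum.cong) (use B in auto)
  moreover have "(\<Sum>l<L. lamS l * ((frob_norm (US l))\<^sup>2 + (frob_norm (VS l))\<^sup>2)) = 2 * (\<Sum>l<L. lamS l * nuclear_norm (S l))"
    unfolding sum_distrib_left by (rule sum.cong) (use S in auto)
  ultimately show ?thesis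
    unfolding F_obj_def G_obj_def w_eq by (intro bexI[of _ "(UB, VB, US, VS)"]) simp_all
qed

lemma G_obj_penalty_le:
  fixes UB VB US VS :: "nat \<Rightarrow> real mat" and X Y :: "real mat"
    and nj :: "nat \<Rightarrow> nat" and CY :: "nat \<Rightarrow> nat \<Rightarrow> bool"
  assumes lamB: "\<forall>k<K. lamB k > 0" and lamS: "\<forall>l<L. lamS l > 0"
  defines "G \<equiv> G_obj nj CY X Y K L lamB lamS (UB, VB, US, VS)"
  shows "k < K \<Longrightarrow> lamB k * (frob_norm (UB k))\<^sup>2 \<le> 2 * G"
    and "k < K \<Longrightarrow> lamB k * (frob_norm (VB k))\<^sup>2 \<le> 2 * G"
    and "l < L \<Longrightarrow> lamS l * (frob_norm (US l))\<^sup>2 \<le> 2 * G"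
    and "l < L \<Longrightarrow> lamS l * (frob_norm (VS l))\<^sup>2 \<le> 2 * G"
proof -
  define R where "R = (frob_norm (residual X K (masked_Y nj CY Y) (\<lambda>k. UB k * transpose_mat (VB k))
           L (\<lambda>l. US l * transpose_mat (VS l))))\<^sup>2"
  define PB where "PB k = lamB k * (frob_norm (UB k))\<^sup>2 + lamB k * (frob_norm (VB k))\<^sup>2" for k
  define PS where "PS l = lamS l * (frob_norm (US l))\<^sup>2 + lamS l * (frob_norm (VS l))\<^sup>2" for l
  have PB: "\<And>k. k \<in> {..<K} \<Longrightarrow> PB k \<ge> 0" and PS: "\<And>l. l \<in> {..<L} \<Longrightarrow> PS l \<ge> 0"
    using lamB lamS unfolding PB_def PS_def by (simp_all add: less_imp_le)
  have G2: "2 * G = R + sum PB {..<K} + sum PS {..<L}"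
    unfolding G_def G_obj_def R_def PB_def PS_def by (simp add: distrib_left)
  have nonneg: "R \<ge> 0" "sum PB {..<K} \<ge> 0" "sum PS {..<L} \<ge> 0"
    using PB PS by (auto simp: R_def intro!: sum_nonneg)
  have PB_le: "PB k \<le> 2 * G" if "k < K" for k
    using member_le_sum[of k "{..<K}" PB, OF _ PB] nonneg that unfolding G2 by simp
  have PS_le: "PS l \<le> 2 * G" if "l < L" for l
    using member_le_sum[of l "{..<L}" PS, OF _ PS] nonneg that unfolding G2 by simp
  have nnB: "0 \<le> lamB k * (frob_norm (UB k))\<^sup>2 \<and> 0 \<le> lamB k * (frob_norm (VB k))\<^sup>2" if "k < K" for k
    using lamB that by (simp add: less_imp_le)
  have nnS: "0 \<le> lamS l * (frob_norm (US l))\<^sup>2 \<and> 0 \<le> lamS l * (frob_norm (VS l))\<^sup>2" if "l < L" for l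
    using lamS that by (simp add: less_imp_le)
  show "lamB k * (frob_norm (UB k))\<^sup>2 \<le> 2 * G" if "k < K"
    using PB_le[OF that] nnB[OF that] unfolding PB_def by linarith
  show "lamB k * (frob_norm (VB k))\<^sup>2 \<le> 2 * G" if "k < K"
    using PB_le[OF that] nnB[OF that] unfolding PB_def by linarith
  show "lamS l * (frob_norm (US l))\<^sup>2 \<le> 2 * G" if "l < L"
    using PS_le[OF that] nnS[OF that] unfolding PS_def by linarith
  show "lamS l * (frob_norm (VS l))\<^sup>2 \<le> 2 * G" if "l < L"
    using PS_le[OF that] nnS[OF that] unfolding PS_def by linarith
qed

lemma G_obj_tendsto:
  assumes X: "X \<in> carrier_mat p n" and Y: "Y \<in> carrier_mat q n"
    and UB: "\<And>k. k < K \<Longrightarrow> mat_tendsto (\<lambda>m. UBs m k) (UB k) p rB"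
    and VB: "\<And>k. k < K \<Longrightarrow> mat_tendsto (\<lambda>m. VBs m k) (VB k) q rB"
    and US: "\<And>l. l < L \<Longrightarrow> mat_tendsto (\<lambda>m. USs m l) (US l) p rS"
    and VS: "\<And>l. l < L \<Longrightarrow> mat_tendsto (\<lambda>m. VSs m l) (VS l) n rS"
  shows "(\<lambda>m. G_obj nj CY X Y K L lamB lamS (UBs m, VBs m, USs m, VSs m))
           \<longlonglongrightarrow> G_obj nj CY X Y K L lamB lamS (UB, VB, US, VS)"
proof -
  have "masked_Y nj CY Y k \<in> carrier_mat q n" for k
    using Y unfolding masked_Y_def by simp
  then have "mat_tendsto (\<lambda>m. UBs m k * transpose_mat (VBs m k) * masked_Y nj CY Y k)
               (UB k * transpose_mat (VB k) * masked_Y nj CY Y k) p n" if "k < K" for k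
    using mat_tendsto_mult[OF mat_tendsto_mult[OF UB[OF that] mat_tendsto_transpose[OF VB[OF that]]]
        mat_tendsto_const] by blast
  moreover have "mat_tendsto (\<lambda>m. USs m l * transpose_mat (VSs m l)) (US l * transpose_mat (VS l)) p n"
    if "l < L" for l
    using mat_tendsto_mult[OF US[OF that] mat_tendsto_transpose[OF VS[OF that]]] .
  ultimately have "mat_tendsto (\<lambda>m. residual X K (masked_Y nj CY Y) (\<lambda>k. UBs m k * transpose_mat (VBs m k))
                  L (\<lambda>l. USs m l * transpose_mat (VSs m l)))
               (residual X K (masked_Y nj CY Y) (\<lambda>k. UB k * transpose_mat (VB k))
                  L (\<lambda>l. US l * transpose_mat (VS l))) p n"
    by (intro mat_tendsto_residual X)
  then have "(\<lambda>m. (frob_norm (residual X K (masked_Y nj CY Y) (\<lambda>k. UBs m k * transpose_mat (VBs m k))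
                  L (\<lambda>l. USs m l * transpose_mat (VSs m l))))\<^sup>2)
      \<longlonglongrightarrow> (frob_norm (residual X K (masked_Y nj CY Y) (\<lambda>k. UB k * transpose_mat (VB k))
                  L (\<lambda>l. US l * transpose_mat (VS l))))\<^sup>2"
    by (rule tendsto_frob_norm_sq)
  then show ?thesis
    unfolding G_obj_def
    using tendsto_frob_norm_sq[OF UB] tendsto_frob_norm_sq[OF VB]
      tendsto_frob_norm_sq[OF US] tendsto_frob_norm_sq[OF VS]
    by (auto intro!: tendsto_mult tendsto_divide tendsto_add tendsto_sum)
qed

lemma G_feas_closed:
  assumes feas: "\<And>m. (UBs m, VBs m, USs m, VSs m) \<in> G_feas nj CS p q n rB rS K L"
    and UB: "\<And>k. k < K \<Longrightarrow> mat_tendsto (\<lambda>m. UBs m k) (UB k) p rB"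
    and VB: "\<And>k. k < K \<Longrightarrow> mat_tendsto (\<lambda>m. VBs m k) (VB k) q rB"
    and US: "\<And>l. l < L \<Longrightarrow> mat_tendsto (\<lambda>m. USs m l) (US l) p rS"
    and VS: "\<And>l. l < L \<Longrightarrow> mat_tendsto (\<lambda>m. VSs m l) (VS l) n rS"
  shows "(UB, VB, US, VS) \<in> G_feas nj CS p q n rB rS K L"
proof -
  have "US l * transpose_mat (VS l) \<in> Sset nj CS p n l" if "l < L" for l
  proof (rule Sset_closed)
    show "USs m l * transpose_mat (VSs m l) \<in> Sset nj CS p n l" for m
      using feas[of m] that unfolding G_feas_def by blast
    show "mat_tendsto (\<lambda>m. USs m l * transpose_mat (VSs m l)) (US l * transpose_mat (VS l)) p n"
      using mat_tendsto_mult[OF US[OF that] mat_tendsto_transpose[OF VS[OF that]]] .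
  qed
  then show ?thesis
    using UB VB US VS unfolding G_feas_def mat_tendsto_def by blast
qed

lemma G_obj_nonneg:
  assumes "\<forall>k<K. lamB k > 0" and "\<forall>l<L. lamS l > 0"
  shows "G_obj nj CY X Y K L lamB lamS z \<ge> 0"
  using assms unfolding G_obj_def
  by (auto intro!: sum_nonneg add_nonneg_nonneg mult_nonneg_nonneg simp: less_imp_le split: prod.split)

lemma G_sublevel_entry_bound:
  assumes lamB: "\<forall>k<K. lamB k > 0" and lamS: "\<forall>l<L. lamS l > 0"
    and z: "(UB, VB, US, VS) \<in> G_feas nj CS p q n rB rS K L"
    and G: "G_obj nj CY X Y K L lamB lamS (UB, VB, US, VS) \<le> c"
  defines "M \<equiv> 1 + 2 * c * ((\<Sum>k<K. 1 / lamB k) + (\<Sum>l<L. 1 / lamS l))"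
  shows "k < K \<Longrightarrow> a < p \<Longrightarrow> b < rB \<Longrightarrow> \<bar>UB k $$ (a, b)\<bar> \<le> M"
    and "k < K \<Longrightarrow> a < q \<Longrightarrow> b < rB \<Longrightarrow> \<bar>VB k $$ (a, b)\<bar> \<le> M"
    and "l < L \<Longrightarrow> a < p \<Longrightarrow> b < rS \<Longrightarrow> \<bar>US l $$ (a, b)\<bar> \<le> M"
    and "l < L \<Longrightarrow> a < n \<Longrightarrow> b < rS \<Longrightarrow> \<bar>VS l $$ (a, b)\<bar> \<le> M"
proof -
  define w where "w = (\<Sum>k<K. 1 / lamB k) + (\<Sum>l<L. 1 / lamS l)"
  have "c \<ge> 0"
    using G G_obj_nonneg[OF lamB lamS] by (meson order_trans)
  have invB: "1 / lamB k \<le> w" if "k < K" for k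
    using member_le_sum[of k "{..<K}" "\<lambda>k. 1 / lamB k"] sum_nonneg[of "{..<L}" "\<lambda>l. 1 / lamS l"]
      lamB lamS that unfolding w_def by (simp add: less_imp_le)
  have invS: "1 / lamS l \<le> w" if "l < L" for l
    using member_le_sum[of l "{..<L}" "\<lambda>l. 1 / lamS l"] sum_nonneg[of "{..<K}" "\<lambda>k. 1 / lamB k"]
      lamB lamS that unfolding w_def by (simp add: less_imp_le)
  have bound: "\<bar>A $$ (a, b)\<bar> \<le> M"
    if "A \<in> carrier_mat r s" "a < r" "b < s" "lam > 0" "1 / lam \<le> w"
      and "lam * (frob_norm A)\<^sup>2 \<le> 2 * G_obj nj CY X Y K L lamB lamS (UB, VB, US, VS)"
    for A r s a b lam
  proof -
    have "lam * (frob_norm A)\<^sup>2 \<le> 2 * c"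
      using that(6) G by linarith
    then have "(frob_norm A)\<^sup>2 \<le> 2 * c * (1 / lam)"
      using that(4) by (simp add: field_simps)
    also have "\<dots> \<le> 2 * c * w"
      using that \<open>c \<ge> 0\<close> by (intro mult_left_mono) simp_all
    finally show ?thesis
      using abs_entry_le_frob_norm_sq[OF that(1-3)] unfolding M_def w_def by simp
  qed
  note pen = G_obj_penalty_le[OF lamB lamS, where UB = UB and VB = VB and US = US and VS = VS
      and nj = nj and CY = CY and X = X and Y = Y]
  show "\<bar>UB k $$ (a, b)\<bar> \<le> M" if "k < K" "a < p" "b < rB"
    using that z lamB unfolding G_feas_def by (intro bound[OF _ _ _ _ invB pen(1)]) auto
  show "\<bar>VB k $$ (a, b)\<bar> \<le> M" if "k < K" "a < q" "b < rB"
    using that z lamB unfolding G_feas_def by (intro bound[OF _ _ _ _ invB pen(2)]) auto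
  show "\<bar>US l $$ (a, b)\<bar> \<le> M" if "l < L" "a < p" "b < rS"
    using that z lamS unfolding G_feas_def by (intro bound[OF _ _ _ _ invS pen(3)]) auto
  show "\<bar>VS l $$ (a, b)\<bar> \<le> M" if "l < L" "a < n" "b < rS"
    using that z lamS unfolding G_feas_def by (intro bound[OF _ _ _ _ invS pen(4)]) auto
qed

lemma G_sublevel_limit:
  assumes X: "X \<in> carrier_mat p n" and Y: "Y \<in> carrier_mat q n"
    and feas: "\<And>m. (UBs m, VBs m, USs m, VSs m) \<in> G_feas nj CS p q n rB rS K L"
    and le: "\<And>m. G_obj nj CY X Y K L lamB lamS (UBs m, VBs m, USs m, VSs m) \<le> c"
    and cUB: "\<And>k a b. k < K \<Longrightarrow> a < p \<Longrightarrow> b < rB \<Longrightarrow> convergent (\<lambda>m. UBs m k $$ (a, b))"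
    and cVB: "\<And>k a b. k < K \<Longrightarrow> a < q \<Longrightarrow> b < rB \<Longrightarrow> convergent (\<lambda>m. VBs m k $$ (a, b))"
    and cUS: "\<And>l a b. l < L \<Longrightarrow> a < p \<Longrightarrow> b < rS \<Longrightarrow> convergent (\<lambda>m. USs m l $$ (a, b))"
    and cVS: "\<And>l a b. l < L \<Longrightarrow> a < n \<Longrightarrow> b < rS \<Longrightarrow> convergent (\<lambda>m. VSs m l $$ (a, b))"
  shows "\<exists>z\<in>G_feas nj CS p q n rB rS K L. G_obj nj CY X Y K L lamB lamS z \<le> c \<and>
           (\<lambda>m. G_obj nj CY X Y K L lamB lamS (UBs m, VBs m, USs m, VSs m)) \<longlonglongrightarrow> G_obj nj CY X Y K L lamB lamS z"
proof -
  define lim_mat where "lim_mat As r s = mat r s (\<lambda>(a, b). lim (\<lambda>m. As m $$ (a, b)))"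
    for As :: "nat \<Rightarrow> real mat" and r s
  define UB VB US VS where "UB k = lim_mat (\<lambda>m. UBs m k) p rB" and "VB k = lim_mat (\<lambda>m. VBs m k) q rB"
    and "US l = lim_mat (\<lambda>m. USs m l) p rS" and "VS l = lim_mat (\<lambda>m. VSs m l) n rS" for k l
  have UB: "mat_tendsto (\<lambda>m. UBs m k) (UB k) p rB" if "k < K" for k
    unfolding UB_def lim_mat_def using feas that cUB by (intro mat_tendsto_lim) (auto simp: G_feas_def)
  have VB: "mat_tendsto (\<lambda>m. VBs m k) (VB k) q rB" if "k < K" for k
    unfolding VB_def lim_mat_def using feas that cVB by (intro mat_tendsto_lim) (auto simp: G_feas_def)
  have US: "mat_tendsto (\<lambda>m. USs m l) (US l) p rS" if "l < L" for l
    unfolding US_def lim_mat_def using feas that cUS by (intro mat_tendsto_lim) (auto simp: G_feas_def)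
  have VS: "mat_tendsto (\<lambda>m. VSs m l) (VS l) n rS" if "l < L" for l
    unfolding VS_def lim_mat_def using feas that cVS by (intro mat_tendsto_lim) (auto simp: G_feas_def)
  have lim: "(\<lambda>m. G_obj nj CY X Y K L lamB lamS (UBs m, VBs m, USs m, VSs m))
      \<longlonglongrightarrow> G_obj nj CY X Y K L lamB lamS (UB, VB, US, VS)"
    by (rule G_obj_tendsto[OF X Y UB VB US VS])
  then have "G_obj nj CY X Y K L lamB lamS (UB, VB, US, VS) \<le> c"
    using le by (intro LIMSEQ_le_const2) auto
  then show ?thesis
    using lim G_feas_closed[OF feas UB VB US VS] by blast
qed

lemma G_obj_attains_min:
  assumes lamB: "\<forall>k<K. lamB k > 0" and lamS: "\<forall>l<L. lamS l > 0"
    and X: "X \<in> carrier_mat p n" and Y: "Y \<in> carrier_mat q n"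
  shows "\<exists>z. is_arg_min (G_obj nj CY X Y K L lamB lamS) (\<lambda>z. z \<in> G_feas nj CS p q n rB rS K L) z"
proof -
  let ?G = "G_obj nj CY X Y K L lamB lamS" and ?GF = "G_feas nj CS p q n rB rS K L"
  define z0 :: "(nat \<Rightarrow> real mat) \<times> (nat \<Rightarrow> real mat) \<times> (nat \<Rightarrow> real mat) \<times> (nat \<Rightarrow> real mat)"
    where "z0 = (\<lambda>_. 0\<^sub>m p rB, \<lambda>_. 0\<^sub>m q rB, \<lambda>_. 0\<^sub>m p rS, \<lambda>_. 0\<^sub>m n rS)"
  have z0: "z0 \<in> ?GF"
    unfolding z0_def G_feas_def using zero_in_Sset by simp
  text \<open>On this sublevel set the penalties bound all factors; the coordinates are their entries.\<close>
  define S where "S = {z \<in> ?GF. ?G z \<le> ?G z0}"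
  define I :: "(nat \<times> nat \<times> nat \<times> nat) set" where
    "I = {0} \<times> {..<K} \<times> {..<p} \<times> {..<rB} \<union> {1} \<times> {..<K} \<times> {..<q} \<times> {..<rB} \<union>
         {2} \<times> {..<L} \<times> {..<p} \<times> {..<rS} \<union> {3} \<times> {..<L} \<times> {..<n} \<times> {..<rS}"
  define entry where "entry z = (\<lambda>(t, k, a, b). (case z of (UB, VB, US, VS) \<Rightarrow> [UB k, VB k, US k, VS k] ! t) $$ (a, b))"
    for z :: "(nat \<Rightarrow> real mat) \<times> (nat \<Rightarrow> real mat) \<times> (nat \<Rightarrow> real mat) \<times> (nat \<Rightarrow> real mat)"
  have "\<exists>y\<in>S. \<forall>z\<in>S. ?G y \<le> ?G z"
  proof (rule attains_inf_bounded_coords[where I = I and coord = entry])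
    show "finite I" unfolding I_def by simp
    show "S \<noteq> {}" using z0 unfolding S_def by blast
    show "\<bar>entry z i\<bar> \<le> 1 + 2 * ?G z0 * ((\<Sum>k<K. 1 / lamB k) + (\<Sum>l<L. 1 / lamS l))"
      if "z \<in> S" and "i \<in> I" for z i
    proof -
      obtain UB VB US VS where z: "z = (UB, VB, US, VS)" by (cases z) auto
      have "z \<in> ?GF" "?G z \<le> ?G z0" using \<open>z \<in> S\<close> unfolding S_def by auto
      note bound = G_sublevel_entry_bound[OF lamB lamS this[unfolded z]]
      show ?thesis
        using \<open>i \<in> I\<close> bound unfolding I_def entry_def z by auto
    qed
  next
    fix zs assume zs: "\<And>m. zs m \<in> S" and cv: "\<And>i. i \<in> I \<Longrightarrow> convergent (\<lambda>m. entry (zs m) i)"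
    obtain UBs VBs USs VSs where zs_eq: "zs = (\<lambda>m. (UBs m, VBs m, USs m, VSs m))"
      by (intro that[of "\<lambda>m. fst (zs m)" "\<lambda>m. fst (snd (zs m))" "\<lambda>m. fst (snd (snd (zs m)))"
            "\<lambda>m. snd (snd (snd (zs m)))"]) simp
    have feas: "(UBs m, VBs m, USs m, VSs m) \<in> ?GF" and le: "?G (UBs m, VBs m, USs m, VSs m) \<le> ?G z0" for m
      using zs[of m] unfolding zs_eq S_def by auto
    have "convergent (\<lambda>m. UBs m k $$ (a, b))" if "k < K" "a < p" "b < rB" for k a b
      using cv[of "(0, k, a, b)"] that unfolding I_def entry_def zs_eq by simp
    moreover have "convergent (\<lambda>m. VBs m k $$ (a, b))" if "k < K" "a < q" "b < rB" for k a b
      using cv[of "(1, k, a, b)"] that unfolding I_def entry_def zs_eq by simp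
    moreover have "convergent (\<lambda>m. USs m l $$ (a, b))" if "l < L" "a < p" "b < rS" for l a b
      using cv[of "(2, l, a, b)"] that unfolding I_def entry_def zs_eq by simp
    moreover have "convergent (\<lambda>m. VSs m l $$ (a, b))" if "l < L" "a < n" "b < rS" for l a b
      using cv[of "(3, l, a, b)"] that unfolding I_def entry_def zs_eq by simp
    ultimately obtain y where "y \<in> ?GF" "?G y \<le> ?G z0" "(\<lambda>m. ?G (zs m)) \<longlonglongrightarrow> ?G y"
      using G_sublevel_limit[where UBs = UBs and VBs = VBs and USs = USs and VSs = VSs, OF X Y feas le]
      unfolding zs_eq by blast
    then show "\<exists>y\<in>S. (\<lambda>m. ?G (zs m)) \<longlonglongrightarrow> ?G y"
      unfolding S_def by blast
  qed
  then obtain y where y: "y \<in> S" and min: "\<forall>z\<in>S. ?G y \<le> ?G z" by blast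
  have "?G y \<le> ?G z" if "z \<in> ?GF" for z
  proof (cases "?G z \<le> ?G z0")
    case True
    then show ?thesis using min that unfolding S_def by blast
  next
    case False
    then show ?thesis using y unfolding S_def by simp
  qed
  then have "is_arg_min ?G (\<lambda>z. z \<in> ?GF) y"
    using y unfolding S_def is_arg_min_linorder by blast
  then show ?thesis by blast
qed

theorem theorem1:
  fixes p q n J K L rB rS :: nat
    and nj :: "nat \<Rightarrow> nat"
    and X Y :: "real mat"
    and CY CS :: "nat \<Rightarrow> nat \<Rightarrow> bool"
    and lamB lamS :: "nat \<Rightarrow> real"
  assumes "J \<ge> 1" and "p > 0" and "q > 0"
    and "\<forall>j<J. nj j > 0"
    and "n = (\<Sum>j<J. nj j)"
    and "X \<in> carrier_mat p n" and "Y \<in> carrier_mat q n"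
    and "\<forall>k<K. lamB k > 0" and "\<forall>l<L. lamS l > 0"
    and "rB \<ge> min p q" and "rS \<ge> min p n"
  shows "(\<exists>BS. is_arg_min (F_obj nj CY X Y K L lamB lamS) (\<lambda>z. z \<in> F_feas nj CS p q n K L) BS)
       \<and> (\<exists>UV. is_arg_min (G_obj nj CY X Y K L lamB lamS) (\<lambda>z. z \<in> G_feas nj CS p q n rB rS K L) UV)
       \<and> Inf (F_obj nj CY X Y K L lamB lamS ` F_feas nj CS p q n K L)
           = Inf (G_obj nj CY X Y K L lamB lamS ` G_feas nj CS p q n rB rS K L)
       \<and> (\<forall>B S. (B, S) \<in> F_feas nj CS p q n K L \<longrightarrow>
            (is_arg_min (F_obj nj CY X Y K L lamB lamS) (\<lambda>z. z \<in> F_feas nj CS p q n K L) (B, S)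
             \<longleftrightarrow> (\<exists>UB VB US VS.
                   is_arg_min (G_obj nj CY X Y K L lamB lamS)
                     (\<lambda>z. z \<in> G_feas nj CS p q n rB rS K L) (UB, VB, US, VS)
                   \<and> (\<forall>k<K. B k = UB k * transpose_mat (VB k))
                   \<and> (\<forall>l<L. S l = US l * transpose_mat (VS l)))))"
proof -
  note X = assms(6) and Y = assms(7) and lamB = assms(8) and lamS = assms(9)
  obtain z0 where G_min: "is_arg_min (G_obj nj CY X Y K L lamB lamS) (\<lambda>z. z \<in> G_feas nj CS p q n rB rS K L) z0"
    using G_obj_attains_min[OF lamB lamS X Y] by blast
  have G_le_F: "\<exists>z\<in>G_feas nj CS p q n rB rS K L. factorizes K L z w \<and>
                  G_obj nj CY X Y K L lamB lamS z \<le> F_obj nj CY X Y K L lamB lamS w"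
    if "w \<in> F_feas nj CS p q n K L" for w
    using G_obj_eq_F_obj_balanced[OF that assms(10,11), where CY = CY and X = X and Y = Y
        and lamB = lamB and lamS = lamS] by fastforce
  let ?argminF = "is_arg_min (F_obj nj CY X Y K L lamB lamS) (\<lambda>w. w \<in> F_feas nj CS p q n K L)"
  let ?argminG = "is_arg_min (G_obj nj CY X Y K L lamB lamS) (\<lambda>z. z \<in> G_feas nj CS p q n rB rS K L)"
  have corr: "(\<exists>w. ?argminF w) \<and>
      Inf (F_obj nj CY X Y K L lamB lamS ` F_feas nj CS p q n K L)
        = Inf (G_obj nj CY X Y K L lamB lamS ` G_feas nj CS p q n rB rS K L) \<and>
      (\<forall>w\<in>F_feas nj CS p q n K L. ?argminF w \<longleftrightarrow> (\<exists>z. ?argminG z \<and> factorizes K L z w))"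
    by (rule is_arg_min_correspondence[OF G_min factorizes_feasible F_obj_le_G_obj[OF lamB lamS] G_le_F])
  show ?thesis
  proof (intro conjI allI impI)
    fix B S assume "(B, S) \<in> F_feas nj CS p q n K L"
    then show "?argminF (B, S) \<longleftrightarrow> (\<exists>UB VB US VS. ?argminG (UB, VB, US, VS) \<and>
        (\<forall>k<K. B k = UB k * transpose_mat (VB k)) \<and> (\<forall>l<L. S l = US l * transpose_mat (VS l)))"
      using corr ex_factorizes_iff[of ?argminG K L B S] by blast
  qed (use corr G_min in blast)+
qed

end
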